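(* Let $P$ be an $n\times n$ sign pattern and $A\in\mathcal{Q}(P)$. If $A$ is nilpotent and has the nSSP, then every superpattern of $P$ (including $P$ itself) is a spectrally arbitrary pattern.
   Context: A sign pattern is an array with entries in $\{+,-,0\}$; its qualitative class $\mathcal{Q}(P)$ is the set of real matrices of the same size whose entries have the signs prescribed by $P$. $P'$ is a superpattern of $P$ if $P'$ is obtained from $P$ by replacing some (possibly none) of its $0$ entries by $+$ or $-$. An $n\times n$ sign pattern $P$ is spectrally arbitrary if for every monic real polynomial $p$ of degree $n$ there is $A\in\mathcal{Q}(P)$ with characteristic polynomial $p$. $\circ$ is the entrywise product. A real $n\times n$ matrix $A$ has the nSSP if $X=O$ is the only real $n\times n$ matrix with $A\circ X=O$ and $AX^\top-X^\top A=O$. *)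

theory Defs
  imports "Jordan_Normal_Form.Char_Poly"
begin

datatype sign = SPos | SNeg | SZero

definition sign_of :: "real \<Rightarrow> sign" where
  "sign_of x = (if x > 0 then SPos else if x < 0 then SNeg else SZero)"

definition in_qual_class :: "real mat \<Rightarrow> sign mat \<Rightarrow> bool" where
  "in_qual_class A P \<longleftrightarrow> dim_row A = dim_row P \<and> dim_col A = dim_col P \<and>
     (\<forall>i < dim_row P. \<forall>j < dim_col P. sign_of (A $$ (i, j)) = P $$ (i, j))"

definition superpattern :: "sign mat \<Rightarrow> sign mat \<Rightarrow> bool" where
  "superpattern P' P \<longleftrightarrow> dim_row P' = dim_row P \<and> dim_col P' = dim_col P \<and>
     (\<forall>i < dim_row P. \<forall>j < dim_col P. P $$ (i, j) \<noteq> SZero \<longrightarrow> P' $$ (i, j) = P $$ (i, j))"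

definition spectrally_arbitrary :: "sign mat \<Rightarrow> bool" where
  "spectrally_arbitrary P \<longleftrightarrow> dim_row P = dim_col P \<and>
     (\<forall>p :: real poly. monic p \<and> degree p = dim_row P \<longrightarrow>
        (\<exists>A. in_qual_class A P \<and> char_poly A = p))"

definition hadamard :: "real mat \<Rightarrow> real mat \<Rightarrow> real mat" where
  "hadamard A X = mat (dim_row A) (dim_col A) (\<lambda>(i, j). A $$ (i, j) * X $$ (i, j))"

definition nSSP :: "real mat \<Rightarrow> bool" where
  "nSSP A \<longleftrightarrow> (\<forall>X \<in> carrier_mat (dim_row A) (dim_row A).
     hadamard A X = 0\<^sub>m (dim_row A) (dim_row A) \<and>
     A * transpose_mat X - transpose_mat X * A = 0\<^sub>m (dim_row A) (dim_row A)
     \<longrightarrow> X = 0\<^sub>m (dim_row A) (dim_row A))"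

definition nilpotent_mat :: "real mat \<Rightarrow> bool" where
  "nilpotent_mat A \<longleftrightarrow> (\<exists>k. A ^\<^sub>m k = 0\<^sub>m (dim_row A) (dim_col A))"

end

theory Submission
  imports Defs "Jordan_Normal_Form.Jordan_Normal_Form_Existence"
begin

text \<open>Let \<open>F X = X A\<^sup>T - A\<^sup>T X\<close> and let \<open>X\<^sub>A\<close> keep the entries of \<open>X\<close> on the support
  of \<open>A\<close>. The linear map \<open>T X = X\<^sub>A + F X A - A F X\<close> satisfies
  \<open>\<langle>T X, X\<rangle> = \<parallel>X\<^sub>A\<parallel>\<^sup>2 + \<parallel>F X\<parallel>\<^sup>2\<close>, so the nSSP says precisely that \<open>T\<close> is invertible.
  By a contraction argument, for small \<open>D\<close> and small \<open>Z\<close> there is a small \<open>X\<close> with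
  \<open>(I + F X) (A + X\<^sub>A + Z) = (A + D) (I + F X)\<close>: the matrix \<open>A + X\<^sub>A + Z\<close> is similar to \<open>A + D\<close>.
  As \<open>A\<close> is nilpotent it is similar to a matrix supported on the superdiagonal, and perturbing
  that to a bidiagonal companion matrix shows that every monic polynomial with small lower
  coefficients is the characteristic polynomial of some \<open>A + D\<close> with \<open>D\<close> small.
  Now put the signs of a superpattern \<open>P'\<close> on the zero entries of \<open>A\<close> into \<open>Z\<close>; as \<open>X\<^sub>A\<close> is
  smaller than the nonzero entries of \<open>A\<close>, the matrix \<open>A + X\<^sub>A + Z\<close> lies in \<open>Q(P')\<close>.
  Finally, scaling by \<open>t > 0\<close> preserves the sign pattern and removes the smallness restriction
  on the coefficients.\<close>

section \<open>The entrywise \<open>\<ell>\<^sub>1\<close> norm and contractions\<close>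

definition l1_norm :: "real mat \<Rightarrow> real" where
  "l1_norm X = (\<Sum>i<dim_row X. \<Sum>j<dim_col X. \<bar>X $$ (i,j)\<bar>)"

lemma l1_norm_nonneg: "0 \<le> l1_norm X"
  unfolding l1_norm_def by (intro sum_nonneg) auto

lemma abs_index_le_l1_norm:
  assumes "i < dim_row X" "j < dim_col X"
  shows "\<bar>X $$ (i,j)\<bar> \<le> l1_norm X"
proof -
  have "\<bar>X $$ (i,j)\<bar> \<le> (\<Sum>j<dim_col X. \<bar>X $$ (i,j)\<bar>)"
    using assms by (intro member_le_sum) auto
  also have "\<dots> \<le> l1_norm X" unfolding l1_norm_def
    using assms by (intro member_le_sum[where f = "\<lambda>i. \<Sum>j<dim_col X. \<bar>X $$ (i,j)\<bar>"]) (auto intro: sum_nonneg)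
  finally show ?thesis .
qed

lemma l1_norm_add_le:
  assumes "X \<in> carrier_mat n m" "Y \<in> carrier_mat n m"
  shows "l1_norm (X + Y) \<le> l1_norm X + l1_norm Y"
proof -
  have "l1_norm (X + Y) = (\<Sum>i<n. \<Sum>j<m. \<bar>X $$ (i,j) + Y $$ (i,j)\<bar>)"
    using assms unfolding l1_norm_def by (auto intro!: sum.cong)
  also have "\<dots> \<le> (\<Sum>i<n. \<Sum>j<m. \<bar>X $$ (i,j)\<bar> + \<bar>Y $$ (i,j)\<bar>)"
    by (intro sum_mono abs_triangle_ineq)
  also have "\<dots> = l1_norm X + l1_norm Y" using assms unfolding l1_norm_def
    by (simp add: sum.distrib)
  finally show ?thesis .
qed

lemma l1_norm_uminus: "l1_norm (- X) = l1_norm X"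
  unfolding l1_norm_def by (auto intro!: sum.cong)

lemma l1_norm_diff_le:
  assumes "X \<in> carrier_mat n m" "Y \<in> carrier_mat n m"
  shows "l1_norm (X - Y) \<le> l1_norm X + l1_norm Y"
proof -
  have "X - Y = X + (- Y)" using assms by auto
  then show ?thesis using l1_norm_add_le[of X n m "-Y"] assms l1_norm_uminus[of Y] by auto
qed

lemma l1_norm_diff_commute:
  assumes "X \<in> carrier_mat n m" "Y \<in> carrier_mat n m"
  shows "l1_norm (X - Y) = l1_norm (Y - X)"
  using assms unfolding l1_norm_def by (auto intro!: sum.cong simp: abs_minus_commute)

lemma l1_norm_triangle:
  assumes "A \<in> carrier_mat n m" "B \<in> carrier_mat n m" "C \<in> carrier_mat n m"
  shows "l1_norm (A - C) \<le> l1_norm (A - B) + l1_norm (B - C)"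
proof -
  have "A - C = (A - B) + (B - C)" using assms by (intro eq_matI) auto
  moreover have "A - B \<in> carrier_mat n m" "B - C \<in> carrier_mat n m" using assms by auto
  ultimately show ?thesis using l1_norm_add_le[of "A - B" n m "B - C"] by simp
qed

lemma l1_norm_mult_le:
  assumes "X \<in> carrier_mat n m" "Y \<in> carrier_mat m k"
  shows "l1_norm (X * Y) \<le> l1_norm X * l1_norm Y"
proof -
  have "l1_norm (X * Y) = (\<Sum>i<n. \<Sum>j<k. \<bar>\<Sum>l<m. X $$ (i,l) * Y $$ (l,j)\<bar>)"
    using assms unfolding l1_norm_def
    by (auto intro!: sum.cong simp: scalar_prod_def atLeast0LessThan)
  also have "\<dots> \<le> (\<Sum>i<n. \<Sum>j<k. \<Sum>l<m. \<bar>X $$ (i,l)\<bar> * \<bar>Y $$ (l,j)\<bar>)"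
    by (intro sum_mono) (auto simp: abs_mult[symmetric] intro: sum_abs)
  also have "\<dots> = (\<Sum>i<n. \<Sum>l<m. \<bar>X $$ (i,l)\<bar> * (\<Sum>j<k. \<bar>Y $$ (l,j)\<bar>))"
    by (simp add: sum_distrib_left sum.swap[of _ "{..<k}"])
  also have "\<dots> \<le> (\<Sum>i<n. \<Sum>l<m. \<bar>X $$ (i,l)\<bar> * l1_norm Y)"
  proof (intro sum_mono mult_left_mono)
    fix l assume "l \<in> {..<m}"
    have d: "dim_row Y = m" "dim_col Y = k" using assms by auto
    from \<open>l \<in> {..<m}\<close> show "(\<Sum>j<k. \<bar>Y $$ (l,j)\<bar>) \<le> l1_norm Y" unfolding l1_norm_def d
      by (intro member_le_sum[where f = "\<lambda>l. \<Sum>j<k. \<bar>Y $$ (l,j)\<bar>"]) (auto intro: sum_nonneg)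
  qed auto
  also have "\<dots> = l1_norm X * l1_norm Y" using assms unfolding l1_norm_def
    by (simp add: sum_distrib_right)
  finally show ?thesis .
qed

lemma l1_norm_transpose: "l1_norm (transpose_mat A) = l1_norm A"
  unfolding l1_norm_def by (simp, subst sum.swap, simp)

lemma l1_norm_eq_0_iff:
  assumes "X \<in> carrier_mat n m"
  shows "l1_norm X = 0 \<longleftrightarrow> X = 0\<^sub>m n m"
proof
  assume "l1_norm X = 0"
  then have "\<And>i j. i < n \<Longrightarrow> j < m \<Longrightarrow> X $$ (i,j) = 0"
    using abs_index_le_l1_norm[of _ X] assms by fastforce
  then show "X = 0\<^sub>m n m" using assms by (auto intro!: eq_matI)
qed (auto simp: l1_norm_def)

lemma l1_norm_zero[simp]: "l1_norm (0\<^sub>m n m) = 0"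
  by (auto simp: l1_norm_def)

lemma l1_norm_le_0_imp_eq:
  assumes "X \<in> carrier_mat n m" "Y \<in> carrier_mat n m" "l1_norm (X - Y) \<le> 0"
  shows "X = Y"
proof -
  have "X - Y = 0\<^sub>m n m"
    using assms l1_norm_nonneg[of "X - Y"] l1_norm_eq_0_iff[of "X - Y" n m] minus_carrier_mat by auto
  show ?thesis
  proof (rule eq_matI)
    fix i j assume "i < dim_row Y" "j < dim_col Y"
    then have "(X - Y) $$ (i,j) = 0" using \<open>X - Y = 0\<^sub>m n m\<close> assms by simp
    then show "X $$ (i,j) = Y $$ (i,j)" using \<open>i < dim_row Y\<close> \<open>j < dim_col Y\<close> assms by simp
  qed (use assms in auto)
qed

lemma tendsto_l1_norm_diff:
  assumes "X \<in> carrier_mat n m" "Y \<in> carrier_mat n m" "\<And>k. x k \<in> carrier_mat n m"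
    and "\<And>i j. i < n \<Longrightarrow> j < m \<Longrightarrow> (\<lambda>k. x k $$ (i,j)) \<longlonglongrightarrow> X $$ (i,j)"
  shows "(\<lambda>k. l1_norm (x k - Y)) \<longlonglongrightarrow> l1_norm (X - Y)"
proof -
  have "(\<lambda>k. \<Sum>i<n. \<Sum>j<m. \<bar>x k $$ (i,j) - Y $$ (i,j)\<bar>) \<longlonglongrightarrow> (\<Sum>i<n. \<Sum>j<m. \<bar>X $$ (i,j) - Y $$ (i,j)\<bar>)"
    by (intro tendsto_sum tendsto_rabs tendsto_diff assms(4) tendsto_const) auto
  moreover have "l1_norm (x k - Y) = (\<Sum>i<n. \<Sum>j<m. \<bar>x k $$ (i,j) - Y $$ (i,j)\<bar>)" for k
    using assms(2) assms(3)[of k] unfolding l1_norm_def by (auto intro!: sum.cong)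
  moreover have "l1_norm (X - Y) = (\<Sum>i<n. \<Sum>j<m. \<bar>X $$ (i,j) - Y $$ (i,j)\<bar>)"
    using assms(1,2) unfolding l1_norm_def by (auto intro!: sum.cong)
  ultimately show ?thesis by simp
qed

lemma l1_norm_Cauchy_limit:
  fixes x :: "nat \<Rightarrow> real mat"
  assumes x: "\<And>k. x k \<in> carrier_mat n m"
    and Cauchy: "\<And>k l. k \<le> l \<Longrightarrow> l1_norm (x l - x k) \<le> b k"
    and b: "b \<longlonglongrightarrow> 0"
  shows "\<exists>X \<in> carrier_mat n m. \<forall>k. l1_norm (X - x k) \<le> b k"
proof -
  have dist_le: "dist (x k $$ (i,j)) (x l $$ (i,j)) \<le> b (min k l)" if "i < n" "j < m" for i j k l
  proof -
    have "dist (x k $$ (i,j)) (x l $$ (i,j)) = \<bar>(x (max k l) - x (min k l)) $$ (i,j)\<bar>"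
      using x[of k] x[of l] that by (cases "k \<le> l") (auto simp: dist_real_def max_def min_def abs_minus_commute)
    also have "\<dots> \<le> l1_norm (x (max k l) - x (min k l))"
      using x[of "max k l"] x[of "min k l"] that by (intro abs_index_le_l1_norm) auto
    also have "\<dots> \<le> b (min k l)" by (intro Cauchy) simp
    finally show ?thesis .
  qed
  have conv: "convergent (\<lambda>k. x k $$ (i,j))" if ij: "i < n" "j < m" for i j
  proof (rule Cauchy_convergent, rule metric_CauchyI)
    fix e :: real assume "0 < e"
    with b obtain M where M: "\<And>k. k \<ge> M \<Longrightarrow> b k < e"
      unfolding LIMSEQ_def dist_real_def by fastforce
    have "dist (x k $$ (i,j)) (x l $$ (i,j)) < e" if "k \<ge> M" "l \<ge> M" for k l
      using dist_le[OF ij, of k l] M[of "min k l"] that by simp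
    then show "\<exists>M. \<forall>k\<ge>M. \<forall>l\<ge>M. dist (x k $$ (i,j)) (x l $$ (i,j)) < e" by blast
  qed
  define X where "X = mat n m (\<lambda>(i,j). lim (\<lambda>k. x k $$ (i,j)))"
  have X: "X \<in> carrier_mat n m" by (simp add: X_def)
  have "(\<lambda>k. x k $$ (i,j)) \<longlonglongrightarrow> X $$ (i,j)" if "i < n" "j < m" for i j
    using conv[OF that] that by (simp add: X_def convergent_LIMSEQ_iff)
  then have "(\<lambda>l. l1_norm (x l - x k)) \<longlonglongrightarrow> l1_norm (X - x k)" for k
    by (rule tendsto_l1_norm_diff[OF X x x])
  then have "l1_norm (X - x k) \<le> b k" for k
    by (rule LIMSEQ_le_const2) (use Cauchy in \<open>intro exI[of _ k] allI impI\<close>)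
  with X show ?thesis by blast
qed

context
  fixes \<Psi> :: "real mat \<Rightarrow> real mat" and q \<rho> :: real and n m :: nat
  assumes q: "0 \<le> q" "q < 1" and \<rho>: "0 \<le> \<rho>"
    and maps: "\<And>X. X \<in> carrier_mat n m \<Longrightarrow> l1_norm X \<le> \<rho> \<Longrightarrow> \<Psi> X \<in> carrier_mat n m \<and> l1_norm (\<Psi> X) \<le> \<rho>"
    and lip: "\<And>X Y. X \<in> carrier_mat n m \<Longrightarrow> l1_norm X \<le> \<rho> \<Longrightarrow> Y \<in> carrier_mat n m \<Longrightarrow> l1_norm Y \<le> \<rho>
      \<Longrightarrow> l1_norm (\<Psi> X - \<Psi> Y) \<le> q * l1_norm (X - Y)"
begin

lemma contraction_iterates:
  defines "x \<equiv> \<lambda>k. (\<Psi> ^^ k) (0\<^sub>m n m)"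
  shows "x k \<in> carrier_mat n m" "l1_norm (x k) \<le> \<rho>"
    and "k \<le> l \<Longrightarrow> l1_norm (x l - x k) \<le> q ^ k * (2 * \<rho> / (1 - q))"
proof -
  have xS: "x (Suc k) = \<Psi> (x k)" for k unfolding x_def by simp
  have inb: "x k \<in> carrier_mat n m \<and> l1_norm (x k) \<le> \<rho>" for k
  proof (induction k)
    case 0 then show ?case using \<rho> by (simp add: x_def)
  next
    case (Suc k) then show ?case using maps xS by metis
  qed
  then show xc: "x k \<in> carrier_mat n m" and xb: "l1_norm (x k) \<le> \<rho>" for k by blast+
  have step: "l1_norm (x (Suc k) - x k) \<le> q ^ k * (2 * \<rho>)" for k
  proof (induction k)
    case 0
    show ?case using l1_norm_diff_le[OF xc xc, of 1 0] xb[of 0] xb[of 1] by simp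
  next
    case (Suc k)
    have "l1_norm (x (Suc (Suc k)) - x (Suc k)) \<le> q * l1_norm (x (Suc k) - x k)"
      unfolding xS[of "Suc k"] xS[of k] by (rule lip) (auto simp: xc xb xS[symmetric])
    also have "\<dots> \<le> q * (q ^ k * (2 * \<rho>))" using Suc q by (intro mult_left_mono) auto
    finally show ?case by simp
  qed
  show "l1_norm (x l - x k) \<le> q ^ k * (2 * \<rho> / (1 - q))" if kl: "k \<le> l"
  proof -
    obtain d where l: "l = k + d" using le_Suc_ex[OF kl] by blast
    have "l1_norm (x (k + d) - x k) \<le> 2 * \<rho> * q ^ k * (1 - q ^ d) / (1 - q)"
    proof (induction d)
      case 0 then show ?case using xc[of k] by (simp add: l1_norm_eq_0_iff)
    next
      case (Suc d)
      have "l1_norm (x (k + Suc d) - x k) \<le> l1_norm (x (Suc (k + d)) - x (k + d)) + l1_norm (x (k + d) - x k)"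
        using l1_norm_triangle[OF xc xc xc] by simp
      also have "\<dots> \<le> q ^ (k + d) * (2 * \<rho>) + 2 * \<rho> * q ^ k * (1 - q ^ d) / (1 - q)"
        using step Suc by (intro add_mono) auto
      also have "\<dots> = 2 * \<rho> * q ^ k * (1 - q ^ Suc d) / (1 - q)"
        using q by (simp add: field_simps power_add)
      finally show ?case .
    qed
    also have "\<dots> \<le> 2 * \<rho> * q ^ k * 1 / (1 - q)"
      using q \<rho> by (intro divide_right_mono mult_left_mono) auto
    finally show ?thesis by (simp add: mult.commute l)
  qed
qed

lemma contraction_fixpoint:
  "\<exists>X \<in> carrier_mat n m. l1_norm X \<le> \<rho> \<and> \<Psi> X = X"
proof -
  define x where "x k = (\<Psi> ^^ k) (0\<^sub>m n m)" for k
  define C where "C = 2 * \<rho> / (1 - q)"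
  have xS: "x (Suc k) = \<Psi> (x k)" for k unfolding x_def by simp
  have xc: "x k \<in> carrier_mat n m" and xb: "l1_norm (x k) \<le> \<rho>"
    and tail: "k \<le> l \<Longrightarrow> l1_norm (x l - x k) \<le> q ^ k * C" for k l
    using contraction_iterates unfolding x_def C_def by auto
  have qC: "(\<lambda>k. q ^ k * C) \<longlonglongrightarrow> 0"
    using q by (auto intro!: tendsto_mult_left_zero LIMSEQ_power_zero)
  obtain X where X: "X \<in> carrier_mat n m" and Xk: "\<And>k. l1_norm (X - x k) \<le> q ^ k * C"
    using l1_norm_Cauchy_limit[OF xc tail qC] by blast
  have "l1_norm X \<le> \<rho> + q ^ k * C" for k
  proof -
    have "X - x k \<in> carrier_mat n m" by (rule minus_carrier_mat[OF xc])
    then have "l1_norm ((X - x k) + x k) \<le> l1_norm (X - x k) + l1_norm (x k)"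
      using l1_norm_add_le xc by blast
    moreover have "(X - x k) + x k = X" using X xc[of k] by (intro eq_matI) auto
    ultimately have "l1_norm X \<le> l1_norm (X - x k) + l1_norm (x k)" by simp
    then show ?thesis using Xk[of k] xb[of k] by simp
  qed
  moreover have "(\<lambda>k. \<rho> + q ^ k * C) \<longlonglongrightarrow> \<rho>"
    using tendsto_add[OF tendsto_const qC] by simp
  ultimately have Xb: "l1_norm X \<le> \<rho>"
    by (intro LIMSEQ_le_const[of "\<lambda>k. \<rho> + q ^ k * C"]) blast+
  have \<Psi>X: "\<Psi> X \<in> carrier_mat n m" using maps X Xb by blast
  have bound: "l1_norm (\<Psi> X - X) \<le> 2 * (q ^ Suc k * C)" for k
  proof -
    have "l1_norm (\<Psi> X - X) \<le> l1_norm (\<Psi> X - x (Suc k)) + l1_norm (x (Suc k) - X)"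
      using l1_norm_triangle[OF \<Psi>X xc X] .
    also have "l1_norm (\<Psi> X - x (Suc k)) \<le> q * l1_norm (X - x k)"
      unfolding xS by (rule lip) (auto simp: X Xb xc xb)
    also have "l1_norm (x (Suc k) - X) = l1_norm (X - x (Suc k))"
      using l1_norm_diff_commute X xc by metis
    also have "q * l1_norm (X - x k) \<le> q * (q ^ k * C)" using Xk q by (intro mult_left_mono) auto
    finally show ?thesis using Xk[of "Suc k"] by simp
  qed
  have "(\<lambda>k. 2 * (q ^ Suc k * C)) \<longlonglongrightarrow> 0"
    using q by (auto intro!: tendsto_mult_right_zero tendsto_mult_left_zero LIMSEQ_power_zero)
  then have "l1_norm (\<Psi> X - X) \<le> 0"
    by (rule LIMSEQ_le_const) (use bound in blast)
  then have "\<Psi> X = X" by (rule l1_norm_le_0_imp_eq[OF \<Psi>X X])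
  then show ?thesis using X Xb by blast
qed

end

section \<open>The linear map associated with the nSSP\<close>

definition supp_restrict :: "real mat \<Rightarrow> real mat \<Rightarrow> real mat" where
  "supp_restrict A X = mat (dim_row A) (dim_col A) (\<lambda>(i,j). if A $$ (i,j) = 0 then 0 else X $$ (i,j))"

definition comm_transpose :: "real mat \<Rightarrow> real mat \<Rightarrow> real mat" where
  "comm_transpose A X = X * transpose_mat A - transpose_mat A * X"

definition ssp_map :: "real mat \<Rightarrow> real mat \<Rightarrow> real mat" where
  "ssp_map A X = supp_restrict A X + comm_transpose A X * A - A * comm_transpose A X"

definition frob_inner :: "real mat \<Rightarrow> real mat \<Rightarrow> real" where
  "frob_inner U V = (\<Sum>i<dim_row U. \<Sum>j<dim_col U. U $$ (i,j) * V $$ (i,j))"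

lemma supp_restrict_carrier[simp]:
  "A \<in> carrier_mat n n \<Longrightarrow> supp_restrict A X \<in> carrier_mat n n"
  by (auto simp: supp_restrict_def)

lemma comm_transpose_carrier[simp]:
  "A \<in> carrier_mat n n \<Longrightarrow> X \<in> carrier_mat n n \<Longrightarrow> comm_transpose A X \<in> carrier_mat n n"
  by (auto simp: comm_transpose_def)

lemma ssp_map_carrier[simp]:
  "A \<in> carrier_mat n n \<Longrightarrow> X \<in> carrier_mat n n \<Longrightarrow> ssp_map A X \<in> carrier_mat n n"
  unfolding ssp_map_def by (intro minus_carrier_mat mult_carrier_mat comm_transpose_carrier) auto

lemma supp_restrict_dims[simp]:
  "dim_row (supp_restrict A X) = dim_row A" "dim_col (supp_restrict A X) = dim_col A"
  by (auto simp: supp_restrict_def)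

lemma supp_restrict_add:
  "A \<in> carrier_mat n n \<Longrightarrow> X \<in> carrier_mat n n \<Longrightarrow> Y \<in> carrier_mat n n \<Longrightarrow> supp_restrict A (X + Y) = supp_restrict A X + supp_restrict A Y"
  by (rule eq_matI) (auto simp: supp_restrict_def)

lemma supp_restrict_smult:
  "A \<in> carrier_mat n n \<Longrightarrow> X \<in> carrier_mat n n \<Longrightarrow> supp_restrict A (c \<cdot>\<^sub>m X) = c \<cdot>\<^sub>m supp_restrict A X"
  by (rule eq_matI) (auto simp: supp_restrict_def)

lemma supp_restrict_diff:
  assumes A: "A \<in> carrier_mat n n"
    and X: "X \<in> carrier_mat n n"
    and Y: "Y \<in> carrier_mat n n"
  shows "supp_restrict A X - supp_restrict A Y = supp_restrict A (X - Y)"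
  using A X Y by (intro eq_matI) (auto simp: supp_restrict_def)

lemma comm_transpose_add:
  assumes A: "A \<in> carrier_mat n n"
    and X: "X \<in> carrier_mat n n"
    and Y: "Y \<in> carrier_mat n n"
  shows "comm_transpose A (X + Y) = comm_transpose A X + comm_transpose A Y"
proof -
  have At: "transpose_mat A \<in> carrier_mat n n" using A by simp
  have "(X + Y) * transpose_mat A = X * transpose_mat A + Y * transpose_mat A"
    using add_mult_distrib_mat[OF X Y At] .
  moreover have "transpose_mat A * (X + Y) = transpose_mat A * X + transpose_mat A * Y"
    using mult_add_distrib_mat[OF At X Y] .
  ultimately show ?thesis unfolding comm_transpose_def using A X Y At
    by (intro eq_matI) (auto simp del: transpose_carrier_mat)
qed

lemma comm_transpose_smult:
  assumes A: "A \<in> carrier_mat n n" and X: "X \<in> carrier_mat n n"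
  shows "comm_transpose A (c \<cdot>\<^sub>m X) = c \<cdot>\<^sub>m comm_transpose A X"
proof -
  have At: "transpose_mat A \<in> carrier_mat n n" using A by simp
  have "(c \<cdot>\<^sub>m X) * transpose_mat A = c \<cdot>\<^sub>m (X * transpose_mat A)"
    using mult_smult_assoc_mat[OF X At] .
  moreover have "transpose_mat A * (c \<cdot>\<^sub>m X) = c \<cdot>\<^sub>m (transpose_mat A * X)"
    using mult_smult_distrib[OF At X] .
  ultimately show ?thesis unfolding comm_transpose_def using A X At
    by (intro eq_matI) (auto simp del: transpose_carrier_mat simp: algebra_simps)
qed

lemma comm_transpose_diff:
  assumes A: "A \<in> carrier_mat n n"
    and X: "X \<in> carrier_mat n n"
    and Y: "Y \<in> carrier_mat n n"
  shows "comm_transpose A X - comm_transpose A Y = comm_transpose A (X - Y)"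
proof -
  have "X - Y = X + (-1) \<cdot>\<^sub>m Y" using X Y by (intro eq_matI) auto
  then have "comm_transpose A (X - Y) = comm_transpose A X + (-1) \<cdot>\<^sub>m comm_transpose A Y"
    using comm_transpose_add[OF A X smult_carrier_mat[OF Y]] comm_transpose_smult[OF A Y] by simp
  then show ?thesis using comm_transpose_carrier[OF A X] comm_transpose_carrier[OF A Y] by (intro eq_matI) auto
qed

lemma ssp_map_add:
  assumes A: "A \<in> carrier_mat n n"
    and X: "X \<in> carrier_mat n n"
    and Y: "Y \<in> carrier_mat n n"
  shows "ssp_map A (X + Y) = ssp_map A X + ssp_map A Y"
proof -
  have F: "comm_transpose A X \<in> carrier_mat n n" "comm_transpose A Y \<in> carrier_mat n n" using A X Y by auto
  have "comm_transpose A (X + Y) * A = comm_transpose A X * A + comm_transpose A Y * A"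
    unfolding comm_transpose_add[OF A X Y] using add_mult_distrib_mat[OF F A] .
  moreover have "A * comm_transpose A (X + Y) = A * comm_transpose A X + A * comm_transpose A Y"
    unfolding comm_transpose_add[OF A X Y] using mult_add_distrib_mat[OF A F] .
  ultimately show ?thesis unfolding ssp_map_def supp_restrict_add[OF A X Y] using A X Y F
    by (intro eq_matI) (auto simp del: comm_transpose_carrier)
qed

lemma ssp_map_smult:
  assumes A: "A \<in> carrier_mat n n" and X: "X \<in> carrier_mat n n"
  shows "ssp_map A (c \<cdot>\<^sub>m X) = c \<cdot>\<^sub>m ssp_map A X"
proof -
  have F: "comm_transpose A X \<in> carrier_mat n n" using A X by auto
  have "comm_transpose A (c \<cdot>\<^sub>m X) * A = c \<cdot>\<^sub>m (comm_transpose A X * A)"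
    unfolding comm_transpose_smult[OF A X] using mult_smult_assoc_mat[OF F A] .
  moreover have "A * comm_transpose A (c \<cdot>\<^sub>m X) = c \<cdot>\<^sub>m (A * comm_transpose A X)"
    unfolding comm_transpose_smult[OF A X] using mult_smult_distrib[OF A F] .
  ultimately show ?thesis unfolding ssp_map_def supp_restrict_smult[OF A X] using A X F
    by (intro eq_matI) (auto simp del: comm_transpose_carrier simp: algebra_simps)
qed

lemma l1_norm_supp_restrict_le:
  "X \<in> carrier_mat n n \<Longrightarrow> A \<in> carrier_mat n n \<Longrightarrow> l1_norm (supp_restrict A X) \<le> l1_norm X"
  unfolding l1_norm_def supp_restrict_def by (auto intro!: sum_mono)

lemma l1_norm_comm_transpose_le:
  assumes A: "A \<in> carrier_mat n n" and X: "X \<in> carrier_mat n n"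
  shows "l1_norm (comm_transpose A X) \<le> 2 * l1_norm A * l1_norm X"
proof -
  have At: "transpose_mat A \<in> carrier_mat n n" using A by simp
  have "l1_norm (comm_transpose A X) \<le> l1_norm (X * transpose_mat A) + l1_norm (transpose_mat A * X)"
    unfolding comm_transpose_def by (rule l1_norm_diff_le) (use X At in auto)
  also have "\<dots> \<le> l1_norm A * l1_norm X + l1_norm A * l1_norm X"
  proof -
    have "l1_norm (X * transpose_mat A) \<le> l1_norm A * l1_norm X" using l1_norm_mult_le[OF X At] l1_norm_transpose[of A] by (simp add: mult.commute)
    moreover have "l1_norm (transpose_mat A * X) \<le> l1_norm A * l1_norm X" using l1_norm_mult_le[OF At X] l1_norm_transpose[of A] by simp
    ultimately show ?thesis by linarith
  qed
  finally show ?thesis by simp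
qed

lemma frob_inner_mult_right:
  assumes "U \<in> carrier_mat n n" "V \<in> carrier_mat n n" "W \<in> carrier_mat n n"
  shows "frob_inner (U * V) W = frob_inner U (W * transpose_mat V)"
proof -
  have "frob_inner (U * V) W = (\<Sum>i<n. \<Sum>j<n. (\<Sum>k<n. U $$ (i,k) * V $$ (k,j)) * W $$ (i,j))"
    using assms unfolding frob_inner_def by (auto intro!: sum.cong simp: scalar_prod_def atLeast0LessThan)
  also have "\<dots> = (\<Sum>i<n. \<Sum>k<n. U $$ (i,k) * (\<Sum>j<n. W $$ (i,j) * V $$ (k,j)))"
  proof (rule sum.cong[OF refl])
    fix i assume "i \<in> {..<n}"
    have "(\<Sum>j<n. (\<Sum>k<n. U $$ (i,k) * V $$ (k,j)) * W $$ (i,j)) = (\<Sum>j<n. \<Sum>k<n. U $$ (i,k) * (W $$ (i,j) * V $$ (k,j)))"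
      by (simp add: sum_distrib_left sum_distrib_right mult_ac)
    also have "\<dots> = (\<Sum>k<n. \<Sum>j<n. U $$ (i,k) * (W $$ (i,j) * V $$ (k,j)))" by (rule sum.swap)
    also have "\<dots> = (\<Sum>k<n. U $$ (i,k) * (\<Sum>j<n. W $$ (i,j) * V $$ (k,j)))" by (simp add: sum_distrib_left)
    finally show "(\<Sum>j<n. (\<Sum>k<n. U $$ (i,k) * V $$ (k,j)) * W $$ (i,j)) = (\<Sum>k<n. U $$ (i,k) * (\<Sum>j<n. W $$ (i,j) * V $$ (k,j)))" .
  qed
  also have "\<dots> = frob_inner U (W * transpose_mat V)"
    using assms unfolding frob_inner_def by (auto intro!: sum.cong simp: scalar_prod_def atLeast0LessThan)
  finally show ?thesis .
qed

lemma frob_inner_mult_left: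
  assumes "U \<in> carrier_mat n n" "V \<in> carrier_mat n n" "W \<in> carrier_mat n n"
  shows "frob_inner (U * V) W = frob_inner V (transpose_mat U * W)"
proof -
  have "frob_inner (U * V) W = (\<Sum>i<n. \<Sum>j<n. (\<Sum>k<n. U $$ (i,k) * V $$ (k,j)) * W $$ (i,j))"
    using assms unfolding frob_inner_def by (auto intro!: sum.cong simp: scalar_prod_def atLeast0LessThan)
  also have "\<dots> = (\<Sum>i<n. \<Sum>j<n. \<Sum>k<n. V $$ (k,j) * (U $$ (i,k) * W $$ (i,j)))"
    by (simp add: sum_distrib_left sum_distrib_right mult_ac)
  also have "\<dots> = (\<Sum>i<n. \<Sum>k<n. \<Sum>j<n. V $$ (k,j) * (U $$ (i,k) * W $$ (i,j)))"
    by (intro sum.cong refl sum.swap)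
  also have "\<dots> = (\<Sum>k<n. \<Sum>i<n. \<Sum>j<n. V $$ (k,j) * (U $$ (i,k) * W $$ (i,j)))"
    by (rule sum.swap)
  also have "\<dots> = (\<Sum>k<n. \<Sum>j<n. \<Sum>i<n. V $$ (k,j) * (U $$ (i,k) * W $$ (i,j)))"
    by (intro sum.cong refl sum.swap)
  also have "\<dots> = (\<Sum>k<n. \<Sum>j<n. V $$ (k,j) * (\<Sum>i<n. U $$ (i,k) * W $$ (i,j)))"
    by (simp add: sum_distrib_left)
  also have "\<dots> = frob_inner V (transpose_mat U * W)"
    using assms unfolding frob_inner_def by (auto intro!: sum.cong simp: scalar_prod_def atLeast0LessThan)
  finally show ?thesis .
qed

lemma frob_inner_add_left:
  assumes "U \<in> carrier_mat n n" "V \<in> carrier_mat n n" "W \<in> carrier_mat n n"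
  shows "frob_inner (U + V) W = frob_inner U W + frob_inner V W"
proof -
  have "frob_inner (U + V) W = (\<Sum>i<n. \<Sum>j<n. U $$ (i,j) * W $$ (i,j) + V $$ (i,j) * W $$ (i,j))"
    using assms unfolding frob_inner_def by (auto intro!: sum.cong simp: distrib_right)
  then show ?thesis using assms unfolding frob_inner_def by (simp add: sum.distrib)
qed

lemma frob_inner_diff_left:
  assumes "U \<in> carrier_mat n n" "V \<in> carrier_mat n n" "W \<in> carrier_mat n n"
  shows "frob_inner (U - V) W = frob_inner U W - frob_inner V W"
proof -
  have "frob_inner (U - V) W = (\<Sum>i<n. \<Sum>j<n. U $$ (i,j) * W $$ (i,j) - V $$ (i,j) * W $$ (i,j))"
    using assms unfolding frob_inner_def by (auto intro!: sum.cong simp: left_diff_distrib)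
  then show ?thesis using assms unfolding frob_inner_def by (simp add: sum_subtractf)
qed

lemma frob_inner_diff_right:
  assumes "U \<in> carrier_mat n n" "V \<in> carrier_mat n n" "W \<in> carrier_mat n n"
  shows "frob_inner W (U - V) = frob_inner W U - frob_inner W V"
proof -
  have "frob_inner W (U - V) = (\<Sum>i<n. \<Sum>j<n. W $$ (i,j) * U $$ (i,j) - W $$ (i,j) * V $$ (i,j))"
    using assms unfolding frob_inner_def by (auto intro!: sum.cong simp: right_diff_distrib)
  then show ?thesis using assms unfolding frob_inner_def by (simp add: sum_subtractf)
qed

lemma frob_inner_self_nonneg: "frob_inner U U \<ge> 0"
  unfolding frob_inner_def by (intro sum_nonneg) auto

lemma frob_inner_self_eq_0:
  assumes "U \<in> carrier_mat n m" "frob_inner U U = 0"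
  shows "U = 0\<^sub>m n m"
proof -
  have "(\<Sum>i<n. \<Sum>j<m. U $$ (i,j) * U $$ (i,j)) = 0" using assms by (simp add: frob_inner_def)
  then have "\<forall>i\<in>{..<n}. (\<Sum>j<m. U $$ (i,j) * U $$ (i,j)) = 0"
    by (subst (asm) sum_nonneg_eq_0_iff) (auto intro: sum_nonneg)
  then have "\<forall>i\<in>{..<n}. \<forall>j\<in>{..<m}. U $$ (i,j) * U $$ (i,j) = 0"
    by (subst (asm) sum_nonneg_eq_0_iff) auto
  then show ?thesis using assms by (auto intro!: eq_matI)
qed

lemma frob_inner_ssp_map:
  assumes A: "A \<in> carrier_mat n n" and X: "X \<in> carrier_mat n n"
  shows "frob_inner (ssp_map A X) X
    = frob_inner (supp_restrict A X) (supp_restrict A X) + frob_inner (comm_transpose A X) (comm_transpose A X)"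
proof -
  let ?F = "comm_transpose A X" and ?M = "supp_restrict A X"
  have F: "?F \<in> carrier_mat n n" using A X by simp
  have M: "?M \<in> carrier_mat n n" using A by simp
  have mm: "frob_inner ?M X = frob_inner ?M ?M" using A X unfolding frob_inner_def supp_restrict_def by (auto intro!: sum.cong)
  have FA: "?F * A \<in> carrier_mat n n" and AF: "A * ?F \<in> carrier_mat n n" using F A by auto
  have "frob_inner (ssp_map A X) X = frob_inner (?M + ?F * A) X - frob_inner (A * ?F) X"
    unfolding ssp_map_def using M FA AF X by (intro frob_inner_diff_left) auto
  also have "\<dots> = frob_inner ?M X + frob_inner (?F * A) X - frob_inner (A * ?F) X"
    using M FA X by (simp add: frob_inner_add_left)
  also have "\<dots> = frob_inner ?M ?M + (frob_inner ?F (X * transpose_mat A) - frob_inner ?F (transpose_mat A * X))"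
    by (simp add: frob_inner_mult_right[OF F A X] frob_inner_mult_left[OF A F X] mm)
  also have "frob_inner ?F (X * transpose_mat A) - frob_inner ?F (transpose_mat A * X)
      = frob_inner ?F (X * transpose_mat A - transpose_mat A * X)"
    using A X F by (intro frob_inner_diff_right[symmetric]) auto
  also have "X * transpose_mat A - transpose_mat A * X = ?F" unfolding comm_transpose_def ..
  finally show ?thesis .
qed

lemma ssp_map_eq_0_imp_eq_0:
  assumes A: "A \<in> carrier_mat n n" and X: "X \<in> carrier_mat n n"
  and ns: "nSSP A" and T0: "ssp_map A X = 0\<^sub>m n n"
  shows "X = 0\<^sub>m n n"
proof -
  have "frob_inner (ssp_map A X) X = 0" using T0 by (simp add: frob_inner_def)
  then have "frob_inner (supp_restrict A X) (supp_restrict A X) + frob_inner (comm_transpose A X) (comm_transpose A X) = 0"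
    using frob_inner_ssp_map[OF A X] by simp
  then have "frob_inner (supp_restrict A X) (supp_restrict A X) = 0" "frob_inner (comm_transpose A X) (comm_transpose A X) = 0"
    using frob_inner_self_nonneg add_nonneg_eq_0_iff by blast+
  then have m0: "supp_restrict A X = 0\<^sub>m n n" and f0: "comm_transpose A X = 0\<^sub>m n n"
    using frob_inner_self_eq_0 A X by (meson comm_transpose_carrier supp_restrict_carrier)+
  have h: "hadamard A X = 0\<^sub>m (dim_row A) (dim_row A)"
  proof (rule eq_matI)
    fix i j assume ij: "i < dim_row (0\<^sub>m (dim_row A) (dim_row A))" "j < dim_col (0\<^sub>m (dim_row A) (dim_row A))"
    then have "supp_restrict A X $$ (i,j) = 0" using m0 A by simp
    then show "hadamard A X $$ (i,j) = 0\<^sub>m (dim_row A) (dim_row A) $$ (i,j)"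
      using ij A by (auto simp: hadamard_def supp_restrict_def split: if_splits)
  qed (use A in \<open>auto simp: hadamard_def\<close>)
  have c: "A * transpose_mat X - transpose_mat X * A = 0\<^sub>m (dim_row A) (dim_row A)"
  proof -
    have "transpose_mat (comm_transpose A X) = A * transpose_mat X - transpose_mat X * A"
      unfolding comm_transpose_def using A X
      by (subst transpose_minus[of _ n n]) (auto simp: transpose_mult[of _ n n])
    then show ?thesis using f0 A by simp
  qed
  show ?thesis using ns h c X A unfolding nSSP_def by auto
qed

definition vec_of_mat :: "nat \<Rightarrow> real mat \<Rightarrow> real vec" where
  "vec_of_mat n X = vec (n*n) (\<lambda>p. X $$ (p div n, p mod n))"

definition mat_of_vec :: "nat \<Rightarrow> real vec \<Rightarrow> real mat" where
  "mat_of_vec n v = mat n n (\<lambda>(i,j). v $ (i*n+j))"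

definition unit_mat :: "nat \<Rightarrow> nat \<Rightarrow> real mat" where
  "unit_mat n q = mat n n (\<lambda>(i,j). if i*n+j = q then 1 else 0)"

lemma pair_index:
  assumes "i < n" "j < (n::nat)"
  shows "(i*n+j) div n = i" "(i*n+j) mod n = j" "i*n+j < n*n" "j+i*n < n*n"
proof -
  show "(i*n+j) div n = i" "(i*n+j) mod n = j" using assms by auto
  have "i*n+j < i*n + n" using assms by simp
  also have "\<dots> = Suc i * n" by simp
  also have "\<dots> \<le> n*n" using assms by (intro mult_le_mono1) simp
  finally show "i*n+j < n*n" "j+i*n < n*n" by (simp_all add: add.commute)
qed

lemma split_index:
  assumes "p < n*(n::nat)"
  shows "p div n < n" "p mod n < n" "(p div n)*n + p mod n = p"
proof -
  have n: "n > 0" using assms by (cases n) auto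
  show "p div n < n" using assms by (simp add: less_mult_imp_div_less)
  show "p mod n < n" using n by simp
  show "(p div n)*n + p mod n = p" by simp
qed

lemma mat_of_vec_carrier[simp]: "mat_of_vec n v \<in> carrier_mat n n" by (simp add: mat_of_vec_def)

lemma vec_of_mat_carrier[simp]:
  "vec_of_mat n X \<in> carrier_vec (n*n)"
  by (simp add: vec_of_mat_def)

lemma unit_mat_carrier[simp]: "unit_mat n q \<in> carrier_mat n n" by (simp add: unit_mat_def)

lemma mat_of_vec_of_mat:
  "X \<in> carrier_mat n n \<Longrightarrow> mat_of_vec n (vec_of_mat n X) = X"
  by (rule eq_matI) (auto simp: mat_of_vec_def vec_of_mat_def pair_index)

lemma vec_of_mat_of_vec:
  "v \<in> carrier_vec (n*n) \<Longrightarrow> vec_of_mat n (mat_of_vec n v) = v"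
  by (rule eq_vecI) (auto simp: mat_of_vec_def vec_of_mat_def split_index)

lemma linear_functional_unit_mat_expansion:
  fixes \<phi> :: "real mat \<Rightarrow> real"
  assumes add: "\<And>X Y. X \<in> carrier_mat n n \<Longrightarrow> Y \<in> carrier_mat n n \<Longrightarrow> \<phi> (X + Y) = \<phi> X + \<phi> Y"
  and sm: "\<And>c X. X \<in> carrier_mat n n \<Longrightarrow> \<phi> (c \<cdot>\<^sub>m X) = c * \<phi> X"
  and X: "X \<in> carrier_mat n n"
  shows "\<phi> X = (\<Sum>q<n*n. X $$ (q div n, q mod n) * \<phi> (unit_mat n q))"
proof -
  define S where "S k = mat n n (\<lambda>(i,j). if i*n+j < k then X $$ (i,j) else 0)" for k
  have Sc: "S k \<in> carrier_mat n n" for k by (simp add: S_def)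
  have S0: "S 0 = 0 \<cdot>\<^sub>m S 0" by (rule eq_matI) (auto simp: S_def)
  have "\<phi> (S 0) = 0" using sm[OF Sc[of 0], of 0] S0 by (metis mult_zero_left)
  have Ssuc: "S (Suc k) = S k + X $$ (k div n, k mod n) \<cdot>\<^sub>m unit_mat n k" if "k < n*n" for k
  proof (rule eq_matI)
    fix i j assume ij: "i < dim_row (S k + X $$ (k div n, k mod n) \<cdot>\<^sub>m unit_mat n k)"
       "j < dim_col (S k + X $$ (k div n, k mod n) \<cdot>\<^sub>m unit_mat n k)"
    then have ij': "i < n" "j < n" by (auto simp: S_def unit_mat_def)
    show "S (Suc k) $$ (i,j) = (S k + X $$ (k div n, k mod n) \<cdot>\<^sub>m unit_mat n k) $$ (i,j)"
    proof (cases "i*n+j = k")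
      case True
      then have "k div n = i" "k mod n = j" using pair_index[OF ij'] by auto
      then show ?thesis using ij' True by (simp add: S_def unit_mat_def)
    next
      case False
      then show ?thesis using ij' by (auto simp: S_def unit_mat_def)
    qed
  qed (auto simp: S_def unit_mat_def)
  have ind: "k \<le> n*n \<Longrightarrow> \<phi> (S k) = (\<Sum>q<k. X $$ (q div n, q mod n) * \<phi> (unit_mat n q))" for k
  proof (induction k)
    case 0 then show ?case using \<open>\<phi> (S 0) = 0\<close> by simp
  next
    case (Suc k)
    then have "\<phi> (S (Suc k)) = \<phi> (S k) + X $$ (k div n, k mod n) * \<phi> (unit_mat n k)"
      using Ssuc[of k] add[OF Sc smult_carrier_mat[OF unit_mat_carrier]] sm[OF unit_mat_carrier] by simp
    then show ?case using Suc by simp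
  qed
  have "S (n*n) = X" using X by (intro eq_matI) (auto simp: S_def pair_index)
  then show ?thesis using ind[of "n*n"] by simp
qed

definition ssp_map_mat :: "nat \<Rightarrow> real mat \<Rightarrow> real mat" where
  "ssp_map_mat n A = mat (n*n) (n*n) (\<lambda>(p,q). ssp_map A (unit_mat n q) $$ (p div n, p mod n))"

lemma ssp_map_mat_carrier[simp]:
  "ssp_map_mat n A \<in> carrier_mat (n*n) (n*n)"
  by (simp add: ssp_map_mat_def)

lemma ssp_map_mat_mult_vec:
  assumes A: "A \<in> carrier_mat n n" and X: "X \<in> carrier_mat n n"
  shows "ssp_map_mat n A *\<^sub>v vec_of_mat n X = vec_of_mat n (ssp_map A X)"
proof (rule eq_vecI)
  fix p assume "p < dim_vec (vec_of_mat n (ssp_map A X))"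
  then have p: "p < n*n" by (simp add: vec_of_mat_def)
  let ?\<phi> = "\<lambda>Y. ssp_map A Y $$ (p div n, p mod n)"
  have "?\<phi> X = (\<Sum>q<n*n. X $$ (q div n, q mod n) * ?\<phi> (unit_mat n q))"
  proof (rule linear_functional_unit_mat_expansion[OF _ _ X])
    fix Y Z :: "real mat" assume "Y \<in> carrier_mat n n" "Z \<in> carrier_mat n n"
    then show "?\<phi> (Y + Z) = ?\<phi> Y + ?\<phi> Z" using ssp_map_add[OF A] split_index[OF p] A
      carrier_matD[OF ssp_map_carrier[OF A \<open>Y \<in> carrier_mat n n\<close>]]
      carrier_matD[OF ssp_map_carrier[OF A \<open>Z \<in> carrier_mat n n\<close>]] by simp
  next
    fix c :: real and Y :: "real mat" assume "Y \<in> carrier_mat n n"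
    then show "?\<phi> (c \<cdot>\<^sub>m Y) = c * ?\<phi> Y" using ssp_map_smult[OF A] split_index[OF p] A
      carrier_matD[OF ssp_map_carrier[OF A \<open>Y \<in> carrier_mat n n\<close>]] by simp
  qed
  then show "(ssp_map_mat n A *\<^sub>v vec_of_mat n X) $ p = vec_of_mat n (ssp_map A X) $ p"
    using p by (simp add: ssp_map_mat_def vec_of_mat_def scalar_prod_def atLeast0LessThan mult.commute)
qed (simp add: ssp_map_mat_def vec_of_mat_def)

lemma det_ssp_map_mat_ne_0:
  assumes A: "A \<in> carrier_mat n n" and ns: "nSSP A"
  shows "det (ssp_map_mat n A) \<noteq> 0"
proof
  assume "det (ssp_map_mat n A) = 0"
  then obtain v where v: "v \<in> carrier_vec (n*n)" "v \<noteq> 0\<^sub>v (n*n)" "ssp_map_mat n A *\<^sub>v v = 0\<^sub>v (n*n)"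
    using det_0_iff_vec_prod_zero_field[OF ssp_map_mat_carrier] by blast
  let ?X = "mat_of_vec n v"
  have e: "ssp_map_mat n A *\<^sub>v vec_of_mat n ?X = vec_of_mat n (ssp_map A ?X)" by (rule ssp_map_mat_mult_vec[OF A mat_of_vec_carrier])
  have "vec_of_mat n (ssp_map A ?X) = 0\<^sub>v (n*n)" using e unfolding vec_of_mat_of_vec[OF v(1)] v(3) by simp
  then have "ssp_map A ?X = mat_of_vec n (0\<^sub>v (n*n))" using mat_of_vec_of_mat[OF ssp_map_carrier[OF A mat_of_vec_carrier]] by metis
  also have "\<dots> = 0\<^sub>m n n" by (rule eq_matI) (auto simp: mat_of_vec_def pair_index)
  finally have "?X = 0\<^sub>m n n" using ssp_map_eq_0_imp_eq_0[OF A mat_of_vec_carrier ns] by blast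
  then have "v = vec_of_mat n (0\<^sub>m n n)" using vec_of_mat_of_vec[OF v(1)] by metis
  also have "\<dots> = 0\<^sub>v (n*n)" by (rule eq_vecI) (auto simp: vec_of_mat_def split_index)
  finally show False using v(2) by simp
qed

lemma sum_pair_index: "(\<Sum>i<n. \<Sum>j<n. f (i*n+j)) = (\<Sum>p<n*(n::nat). (f p :: 'a :: comm_monoid_add))"
proof -
  have "(\<Sum>i<m. \<Sum>j<n. f (i*n+j)) = (\<Sum>p<m*n. f p)" for m
  proof (induction m)
    case (Suc m)
    have "(\<Sum>p<Suc m * n. f p) = (\<Sum>p<m*n. f p) + (\<Sum>p\<in>{m*n..<m*n+n}. f p)"
      by (simp add: add.commute sum.atLeastLessThan_concat[symmetric] lessThan_atLeast0 sum.union_disjoint[symmetric] ivl_disj_un_two(3))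
    also have "(\<Sum>p\<in>{m*n..<m*n+n}. f p) = (\<Sum>p\<in>{0+m*n..<n+m*n}. f p)" by (simp add: add.commute)
    also have "\<dots> = (\<Sum>j\<in>{0..<n}. f (j + m*n))" by (rule sum.shift_bounds_nat_ivl)
    also have "\<dots> = (\<Sum>j<n. f (m*n+j))" by (simp add: atLeast0LessThan add.commute)
    finally show ?case using Suc by simp
  qed simp
  then show ?thesis by simp
qed

lemma l1_norm_mat_of_vec_mult_diff_le:
  assumes B: "B \<in> carrier_mat (n*n) (n*n)" and W: "W1 \<in> carrier_mat n n" "W2 \<in> carrier_mat n n"
  shows "l1_norm (mat_of_vec n (B *\<^sub>v vec_of_mat n W1) - mat_of_vec n (B *\<^sub>v vec_of_mat n W2))
    \<le> l1_norm B * l1_norm (W1 - W2)"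
proof -
  let ?d = "\<lambda>q. W1 $$ (q div n, q mod n) - W2 $$ (q div n, q mod n)"
  have dq: "\<bar>?d q\<bar> \<le> l1_norm (W1 - W2)" if "q < n*n" for q
    using abs_index_le_l1_norm[of "q div n" "W1 - W2" "q mod n"] split_index[OF that] W by auto
  have "l1_norm (mat_of_vec n (B *\<^sub>v vec_of_mat n W1) - mat_of_vec n (B *\<^sub>v vec_of_mat n W2))
      = (\<Sum>i<n. \<Sum>j<n. \<bar>(\<Sum>q<n*n. B $$ (i*n+j, q) * ?d q)\<bar>)"
    unfolding l1_norm_def using B W carrier_matD[OF B]
    by (auto intro!: sum.cong simp: mat_of_vec_def vec_of_mat_def pair_index scalar_prod_def atLeast0LessThan
        sum_subtractf[symmetric] algebra_simps)
  also have "\<dots> = (\<Sum>p<n*n. \<bar>(\<Sum>q<n*n. B $$ (p, q) * ?d q)\<bar>)"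
    by (rule sum_pair_index)
  also have "\<dots> \<le> (\<Sum>p<n*n. \<Sum>q<n*n. \<bar>B $$ (p, q)\<bar> * l1_norm (W1 - W2))"
  proof (intro sum_mono)
    fix p assume "p \<in> {..<n*n}"
    have "\<bar>(\<Sum>q<n*n. B $$ (p, q) * ?d q)\<bar> \<le> (\<Sum>q<n*n. \<bar>B $$ (p, q) * ?d q\<bar>)" by (rule sum_abs)
    also have "\<dots> \<le> (\<Sum>q<n*n. \<bar>B $$ (p, q)\<bar> * l1_norm (W1 - W2))"
      by (intro sum_mono) (auto simp: abs_mult intro: mult_left_mono dq)
    finally show "\<bar>(\<Sum>q<n*n. B $$ (p, q) * ?d q)\<bar> \<le> (\<Sum>q<n*n. \<bar>B $$ (p, q)\<bar> * l1_norm (W1 - W2))" .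
  qed
  also have "\<dots> = l1_norm B * l1_norm (W1 - W2)" using B unfolding l1_norm_def by (simp add: sum_distrib_right)
  finally show ?thesis .
qed

lemma ssp_map_right_inverse:
  assumes A: "A \<in> carrier_mat n n" and ns: "nSSP A"
  obtains R c where "\<And>W. W \<in> carrier_mat n n \<Longrightarrow> R W \<in> carrier_mat n n \<and> ssp_map A (R W) = W"
    and "\<And>W1 W2. W1 \<in> carrier_mat n n \<Longrightarrow> W2 \<in> carrier_mat n n \<Longrightarrow> l1_norm (R W1 - R W2) \<le> c * l1_norm (W1 - W2)"
    and "1 \<le> c"
proof -
  let ?K = "ssp_map_mat n A"
  have "?K \<in> Units (ring_mat TYPE(real) (n*n) undefined)"
    using det_non_zero_imp_unit[OF ssp_map_mat_carrier det_ssp_map_mat_ne_0[OF A ns]] .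
  then obtain B where B: "B \<in> carrier_mat (n*n) (n*n)" "?K * B = 1\<^sub>m (n*n)"
    unfolding Units_def ring_mat_def by auto
  define R where "R W = mat_of_vec n (B *\<^sub>v vec_of_mat n W)" for W
  have "ssp_map A (R W) = W" if W: "W \<in> carrier_mat n n" for W
  proof -
    have Bv: "B *\<^sub>v vec_of_mat n W \<in> carrier_vec (n*n)" using B by simp
    have "vec_of_mat n (ssp_map A (R W)) = ?K *\<^sub>v vec_of_mat n (R W)"
      unfolding R_def by (rule ssp_map_mat_mult_vec[OF A mat_of_vec_carrier, symmetric])
    also have "\<dots> = ?K *\<^sub>v (B *\<^sub>v vec_of_mat n W)" unfolding R_def vec_of_mat_of_vec[OF Bv] ..
    also have "\<dots> = vec_of_mat n W"
      using B assoc_mult_mat_vec[OF ssp_map_mat_carrier B(1) vec_of_mat_carrier, symmetric] by simp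
    finally show ?thesis
      using mat_of_vec_of_mat W ssp_map_carrier[OF A mat_of_vec_carrier] unfolding R_def by metis
  qed
  moreover have "l1_norm (R W1 - R W2) \<le> (l1_norm B + 1) * l1_norm (W1 - W2)"
    if "W1 \<in> carrier_mat n n" "W2 \<in> carrier_mat n n" for W1 W2
    using l1_norm_mat_of_vec_mult_diff_le[OF B(1) that] l1_norm_nonneg[of "W1 - W2"]
    unfolding R_def by (simp add: algebra_simps)
  ultimately show ?thesis using that[of R "l1_norm B + 1"] l1_norm_nonneg[of B] by (simp add: R_def)
qed

section \<open>Similarity through a small perturbation\<close>

lemma sum_abs_mult_mat_vec_le:
  fixes F :: "real mat" and v :: "real vec"
  assumes F: "F \<in> carrier_mat n n" and v: "v \<in> carrier_vec n"
  shows "(\<Sum>i<n. \<bar>(F *\<^sub>v v) $ i\<bar>) \<le> l1_norm F * (\<Sum>j<n. \<bar>v $ j\<bar>)"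
proof -
  have "(\<Sum>i<n. \<bar>(F *\<^sub>v v) $ i\<bar>) = (\<Sum>i<n. \<bar>\<Sum>j<n. F $$ (i,j) * v $ j\<bar>)"
    using F v by (auto intro!: sum.cong simp: scalar_prod_def atLeast0LessThan)
  also have "\<dots> \<le> (\<Sum>i<n. \<Sum>j<n. \<bar>F $$ (i,j)\<bar> * \<bar>v $ j\<bar>)"
    by (intro sum_mono) (auto simp: abs_mult[symmetric] intro: sum_abs)
  also have "\<dots> \<le> (\<Sum>i<n. \<Sum>j<n. \<bar>F $$ (i,j)\<bar> * (\<Sum>j<n. \<bar>v $ j\<bar>))"
    by (intro sum_mono mult_left_mono) (auto intro: member_le_sum)
  also have "\<dots> = l1_norm F * (\<Sum>j<n. \<bar>v $ j\<bar>)" using F unfolding l1_norm_def by (simp add: sum_distrib_right)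
  finally show ?thesis .
qed

lemma det_one_plus_ne_0:
  fixes F :: "real mat"
  assumes F: "F \<in> carrier_mat n n" and nF: "l1_norm F < 1"
  shows "det (1\<^sub>m n + F) \<noteq> 0"
proof
  assume "det (1\<^sub>m n + F) = 0"
  then obtain v where v: "v \<in> carrier_vec n" "v \<noteq> 0\<^sub>v n" "(1\<^sub>m n + F) *\<^sub>v v = 0\<^sub>v n"
    using det_0_iff_vec_prod_zero_field[of "1\<^sub>m n + F" n] F by auto
  have "v + F *\<^sub>v v = 0\<^sub>v n"
    using add_mult_distrib_mat_vec[OF one_carrier_mat F v(1)] v by simp
  then have vi: "v $ i = - ((F *\<^sub>v v) $ i)" if "i < n" for i
  proof -
    have "(v + F *\<^sub>v v) $ i = 0" using \<open>v + F *\<^sub>v v = 0\<^sub>v n\<close> that by simp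
    then show ?thesis using that F v(1) by (simp add: eq_neg_iff_add_eq_0)
  qed
  let ?s = "\<Sum>j<n. \<bar>v $ j\<bar>"
  have "?s = (\<Sum>i<n. \<bar>(F *\<^sub>v v) $ i\<bar>)" using vi by (auto intro!: sum.cong)
  also have "\<dots> \<le> l1_norm F * ?s" by (rule sum_abs_mult_mat_vec_le[OF F v(1)])
  finally have le: "?s \<le> l1_norm F * ?s" .
  have "?s > 0"
  proof (rule ccontr)
    assume "\<not> ?s > 0"
    moreover have "?s \<ge> 0" by (intro sum_nonneg) auto
    ultimately have "?s = 0" by linarith
    then have "\<forall>j\<in>{..<n}. \<bar>v $ j\<bar> = 0" by (subst (asm) sum_nonneg_eq_0_iff) auto
    then have "v = 0\<^sub>v n" using v(1) by (intro eq_vecI) auto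
    with v(2) show False ..
  qed
  then have "l1_norm F * ?s < ?s" using mult_strict_right_mono[OF nF] by simp
  with le show False by simp
qed

lemma char_poly_eq_if_intertwined:
  fixes A D M F :: "real mat"
  assumes c: "A \<in> carrier_mat n n" "D \<in> carrier_mat n n" "M \<in> carrier_mat n n" "F \<in> carrier_mat n n"
  and nF: "l1_norm F < 1"
  and eq: "(1\<^sub>m n + F) * M = (A + D) * (1\<^sub>m n + F)"
  shows "char_poly M = char_poly (A + D)"
proof -
  let ?Q = "1\<^sub>m n + F"
  have Q: "?Q \<in> carrier_mat n n" using c by simp
  have "?Q \<in> Units (ring_mat TYPE(real) n undefined)"
    using det_non_zero_imp_unit[OF Q det_one_plus_ne_0[OF c(4) nF]] .
  then obtain P where P: "P \<in> carrier_mat n n" "P * ?Q = 1\<^sub>m n" "?Q * P = 1\<^sub>m n"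
    unfolding Units_def ring_mat_def by auto
  have AD: "A + D \<in> carrier_mat n n" using c by simp
  have "M = P * (A + D) * ?Q"
  proof -
    have "(P * ?Q) * M = M" unfolding P(2) using c(3) by simp
    then have "M = (P * ?Q) * M" by simp
    also have "\<dots> = P * (?Q * M)" using P Q c by (intro assoc_mult_mat) auto
    also have "\<dots> = P * ((A + D) * ?Q)" using eq by simp
    also have "\<dots> = P * (A + D) * ?Q" using P Q AD by simp
    finally show ?thesis .
  qed
  then have "similar_mat_wit M (A + D) P ?Q"
    unfolding similar_mat_wit_def Let_def using P Q AD c by (auto simp del: assoc_mult_mat)
  then have "similar_mat M (A + D)" unfolding similar_mat_def by blast
  then show ?thesis by (rule char_poly_similar)
qed

lemma intertwining_identity:
  fixes A D Z F M :: "real mat"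
  assumes A: "A \<in> carrier_mat n n" and D: "D \<in> carrier_mat n n" and Z: "Z \<in> carrier_mat n n"
    and F: "F \<in> carrier_mat n n" and M: "M \<in> carrier_mat n n"
    and eq: "M + F * A - A * F = D - Z + D * F - F * (M + Z)"
  shows "(1\<^sub>m n + F) * (A + M + Z) = (A + D) * (1\<^sub>m n + F)"
proof -
  have AMZ: "A + M + Z \<in> carrier_mat n n" using A M Z by auto
  have l: "(1\<^sub>m n + F) * (A + M + Z) = (A + M + Z) + (F * A + F * (M + Z))"
  proof -
    have "(1\<^sub>m n + F) * (A + M + Z) = 1\<^sub>m n * (A + M + Z) + F * (A + M + Z)"
      by (rule add_mult_distrib_mat[OF one_carrier_mat F AMZ])
    moreover have "A + M + Z = A + (M + Z)" using A M Z by (intro eq_matI) auto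
    moreover have "F * (A + (M + Z)) = F * A + F * (M + Z)"
      by (rule mult_add_distrib_mat[OF F A]) (use M Z in auto)
    moreover have "1\<^sub>m n * (A + (M + Z)) = A + (M + Z)" by (rule left_mult_one_mat) (use A M Z in auto)
    ultimately show ?thesis by simp
  qed
  have r: "(A + D) * (1\<^sub>m n + F) = (A + A * F) + (D + D * F)"
  proof -
    have "(A + D) * (1\<^sub>m n + F) = A * (1\<^sub>m n + F) + D * (1\<^sub>m n + F)"
      by (rule add_mult_distrib_mat[OF A D]) (use F in auto)
    moreover have "A * (1\<^sub>m n + F) = A * 1\<^sub>m n + A * F" by (rule mult_add_distrib_mat[OF A one_carrier_mat F])
    moreover have "D * (1\<^sub>m n + F) = D * 1\<^sub>m n + D * F" by (rule mult_add_distrib_mat[OF D one_carrier_mat F])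
    ultimately show ?thesis using A D by simp
  qed
  have cs: "F * A \<in> carrier_mat n n" "F * (M + Z) \<in> carrier_mat n n" "A * F \<in> carrier_mat n n"
    "D * F \<in> carrier_mat n n" using F A D M Z by auto
  show ?thesis unfolding l r
  proof (rule eq_matI)
    fix i j assume "i < dim_row (A + A * F + (D + D * F))" "j < dim_col (A + A * F + (D + D * F))"
    then have ij: "i < n" "j < n" using cs D by auto
    have dims: "dim_row (F * A) = n" "dim_col (F * A) = n" "dim_row (F * (M + Z)) = n" "dim_col (F * (M + Z)) = n"
      "dim_row (A * F) = n" "dim_col (A * F) = n" "dim_row (D * F) = n" "dim_col (D * F) = n"
      "dim_row M = n" "dim_col M = n" "dim_row Z = n" "dim_col Z = n" "dim_row D = n" "dim_col D = n"
      "dim_row A = n" "dim_col A = n"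
      using cs M Z D A F by (simp_all add: carrier_matD)
    have "(M + F * A - A * F) $$ (i,j) = (D - Z + D * F - F * (M + Z)) $$ (i,j)" using eq by simp
    then have "M $$ (i,j) + (F * A) $$ (i,j) - (A * F) $$ (i,j)
        = D $$ (i,j) - Z $$ (i,j) + (D * F) $$ (i,j) - (F * (M + Z)) $$ (i,j)"
      using ij dims by (simp del: index_mult_mat)
    then show "(A + M + Z + (F * A + F * (M + Z))) $$ (i,j) = (A + A * F + (D + D * F)) $$ (i,j)"
      using ij dims by (simp del: index_mult_mat)
  qed (use cs D A M Z F in \<open>simp_all add: carrier_matD\<close>)
qed

(* With F = comm_transpose A X, the equation ssp_map A X = perturbation_map A D Z X is exactly the
   intertwining (I + F) (A + supp_restrict A X + Z) = (A + D) (I + F). *)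
definition perturbation_map :: "real mat \<Rightarrow> real mat \<Rightarrow> real mat \<Rightarrow> real mat \<Rightarrow> real mat" where
  "perturbation_map A D Z X =
     D - Z + D * comm_transpose A X - comm_transpose A X * (supp_restrict A X + Z)"

lemma perturbation_map_carrier:
  "A \<in> carrier_mat n n \<Longrightarrow> D \<in> carrier_mat n n \<Longrightarrow> Z \<in> carrier_mat n n \<Longrightarrow> X \<in> carrier_mat n n
    \<Longrightarrow> perturbation_map A D Z X \<in> carrier_mat n n"
  unfolding perturbation_map_def
  by (intro minus_carrier_mat mult_carrier_mat[of _ n n]) auto

lemma l1_norm_comm_transpose_le_mult:
  assumes "A \<in> carrier_mat n n" "X \<in> carrier_mat n n" "2 * l1_norm A \<le> a" "l1_norm X \<le> r"
  shows "l1_norm (comm_transpose A X) \<le> a * r"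
proof -
  have "l1_norm (comm_transpose A X) \<le> 2 * l1_norm A * l1_norm X"
    using l1_norm_comm_transpose_le assms(1,2) .
  also have "\<dots> \<le> a * r"
    using assms(3,4) l1_norm_nonneg[of A] l1_norm_nonneg[of X] by (intro mult_mono) auto
  finally show ?thesis .
qed

lemma l1_norm_perturbation_map_le:
  assumes A: "A \<in> carrier_mat n n" and D: "D \<in> carrier_mat n n" and Z: "Z \<in> carrier_mat n n"
    and X: "X \<in> carrier_mat n n"
    and a: "2 * l1_norm A \<le> a" and nD: "l1_norm D \<le> \<delta>" and nZ: "l1_norm Z \<le> \<delta>" and nX: "l1_norm X \<le> \<rho>"
  shows "l1_norm (perturbation_map A D Z X) \<le> 2 * \<delta> + \<delta> * (a * \<rho>) + a * \<rho> * (\<rho> + \<delta>)"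
proof -
  let ?F = "comm_transpose A X" and ?M = "supp_restrict A X"
  have F: "?F \<in> carrier_mat n n" and M: "?M \<in> carrier_mat n n" using A X by auto
  have nF: "l1_norm ?F \<le> a * \<rho>" by (rule l1_norm_comm_transpose_le_mult[OF A X a nX])
  have nMZ: "l1_norm (?M + Z) \<le> \<rho> + \<delta>"
    using l1_norm_add_le[OF M Z] l1_norm_supp_restrict_le[OF X A] nX nZ by linarith
  have "l1_norm (perturbation_map A D Z X) \<le> l1_norm (D - Z + D * ?F) + l1_norm (?F * (?M + Z))"
    unfolding perturbation_map_def by (rule l1_norm_diff_le) (use D Z F M in auto)
  also have "l1_norm (D - Z + D * ?F) \<le> l1_norm (D - Z) + l1_norm (D * ?F)"
    by (rule l1_norm_add_le) (use D Z F in auto)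
  also have "l1_norm (D - Z) \<le> l1_norm D + l1_norm Z" by (rule l1_norm_diff_le[OF D Z])
  also have "l1_norm (D * ?F) \<le> l1_norm D * l1_norm ?F" by (rule l1_norm_mult_le[OF D F])
  also have "l1_norm (?F * (?M + Z)) \<le> l1_norm ?F * l1_norm (?M + Z)" by (rule l1_norm_mult_le) (use F M Z in auto)
  finally have "l1_norm (perturbation_map A D Z X)
      \<le> l1_norm D + l1_norm Z + l1_norm D * l1_norm ?F + l1_norm ?F * l1_norm (?M + Z)" by simp
  moreover have "l1_norm D * l1_norm ?F \<le> \<delta> * (a * \<rho>)"
    using nD nF by (intro mult_mono) (auto simp: l1_norm_nonneg intro: order_trans[OF l1_norm_nonneg])
  moreover have "l1_norm ?F * l1_norm (?M + Z) \<le> a * \<rho> * (\<rho> + \<delta>)"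
    using nMZ nF by (intro mult_mono) (auto simp: l1_norm_nonneg intro: order_trans[OF l1_norm_nonneg])
  ultimately show ?thesis using nD nZ by linarith
qed

lemma perturbation_map_diff:
  assumes A: "A \<in> carrier_mat n n" and D: "D \<in> carrier_mat n n" and Z: "Z \<in> carrier_mat n n"
    and X1: "X1 \<in> carrier_mat n n" and X2: "X2 \<in> carrier_mat n n"
  shows "perturbation_map A D Z X1 - perturbation_map A D Z X2
    = D * comm_transpose A (X1 - X2) - (comm_transpose A (X1 - X2) * (supp_restrict A X1 + Z)
        + comm_transpose A X2 * supp_restrict A (X1 - X2))"
proof -
  let ?F1 = "comm_transpose A X1" and ?F2 = "comm_transpose A X2"
    and ?Y1 = "supp_restrict A X1 + Z" and ?Y2 = "supp_restrict A X2 + Z"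
  have c: "?F1 \<in> carrier_mat n n" "?F2 \<in> carrier_mat n n" "?Y1 \<in> carrier_mat n n" "?Y2 \<in> carrier_mat n n"
    using A X1 X2 Z by auto
  have "?Y1 - ?Y2 = supp_restrict A X1 - supp_restrict A X2"
    using A X1 X2 Z by (intro eq_matI) auto
  then have Y: "?Y1 - ?Y2 = supp_restrict A (X1 - X2)" using supp_restrict_diff[OF A X1 X2] by simp
  have e1: "D * (?F1 - ?F2) = D * ?F1 - D * ?F2" using mult_minus_distrib_mat[OF D c(1,2)] .
  have e2: "(?F1 - ?F2) * ?Y1 = ?F1 * ?Y1 - ?F2 * ?Y1" using minus_mult_distrib_mat[OF c(1,2,3)] .
  have e3: "?F2 * (?Y1 - ?Y2) = ?F2 * ?Y1 - ?F2 * ?Y2" using mult_minus_distrib_mat[OF c(2,3,4)] .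
  have "(D - Z + D * ?F1 - ?F1 * ?Y1) - (D - Z + D * ?F2 - ?F2 * ?Y2)
      = D * (?F1 - ?F2) - ((?F1 - ?F2) * ?Y1 + ?F2 * (?Y1 - ?Y2))"
    unfolding e1 e2 e3 using c D Z by (intro eq_matI) (auto dest!: carrier_matD)
  then show ?thesis unfolding perturbation_map_def Y comm_transpose_diff[OF A X1 X2] .
qed

lemma l1_norm_perturbation_map_diff_le:
  assumes A: "A \<in> carrier_mat n n" and D: "D \<in> carrier_mat n n" and Z: "Z \<in> carrier_mat n n"
    and X1: "X1 \<in> carrier_mat n n" and X2: "X2 \<in> carrier_mat n n"
    and a: "2 * l1_norm A \<le> a" and nD: "l1_norm D \<le> \<delta>" and nZ: "l1_norm Z \<le> \<delta>"
    and nX1: "l1_norm X1 \<le> \<rho>" and nX2: "l1_norm X2 \<le> \<rho>"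
  shows "l1_norm (perturbation_map A D Z X1 - perturbation_map A D Z X2)
    \<le> a * (2 * \<delta> + 2 * \<rho>) * l1_norm (X1 - X2)"
proof -
  let ?d = "l1_norm (X1 - X2)" and ?F = "comm_transpose A (X1 - X2)" and ?F2 = "comm_transpose A X2"
    and ?Y1 = "supp_restrict A X1 + Z" and ?M = "supp_restrict A (X1 - X2)"
  have X12: "X1 - X2 \<in> carrier_mat n n" using X1 X2 by auto
  have c: "?F \<in> carrier_mat n n" "?F2 \<in> carrier_mat n n" "?Y1 \<in> carrier_mat n n" "?M \<in> carrier_mat n n"
    using A X2 X12 Z by auto
  have nF: "l1_norm ?F \<le> a * ?d" by (rule l1_norm_comm_transpose_le_mult[OF A X12 a order_refl])
  have nF2: "l1_norm ?F2 \<le> a * \<rho>" by (rule l1_norm_comm_transpose_le_mult[OF A X2 a nX2])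
  have nY1: "l1_norm ?Y1 \<le> \<rho> + \<delta>"
    using l1_norm_add_le[OF supp_restrict_carrier[OF A, of X1] Z] l1_norm_supp_restrict_le[OF X1 A] nX1 nZ by linarith
  have nM: "l1_norm ?M \<le> ?d" using l1_norm_supp_restrict_le[OF X12 A] .
  have "l1_norm (perturbation_map A D Z X1 - perturbation_map A D Z X2)
      \<le> l1_norm (D * ?F) + l1_norm (?F * ?Y1 + ?F2 * ?M)"
    unfolding perturbation_map_diff[OF A D Z X1 X2] by (rule l1_norm_diff_le) (use D c in auto)
  also have "l1_norm (?F * ?Y1 + ?F2 * ?M) \<le> l1_norm (?F * ?Y1) + l1_norm (?F2 * ?M)"
    by (rule l1_norm_add_le) (use c in auto)
  also have "l1_norm (D * ?F) \<le> l1_norm D * l1_norm ?F" by (rule l1_norm_mult_le[OF D c(1)])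
  also have "l1_norm (?F * ?Y1) \<le> l1_norm ?F * l1_norm ?Y1" by (rule l1_norm_mult_le[OF c(1,3)])
  also have "l1_norm (?F2 * ?M) \<le> l1_norm ?F2 * l1_norm ?M" by (rule l1_norm_mult_le[OF c(2,4)])
  finally have le: "l1_norm (perturbation_map A D Z X1 - perturbation_map A D Z X2)
      \<le> l1_norm D * l1_norm ?F + l1_norm ?F * l1_norm ?Y1 + l1_norm ?F2 * l1_norm ?M" by simp
  have a0: "0 \<le> a" using a l1_norm_nonneg[of A] by linarith
  have "l1_norm D * l1_norm ?F \<le> \<delta> * (a * ?d)"
    using nD nF by (intro mult_mono) (auto simp: l1_norm_nonneg intro: order_trans[OF l1_norm_nonneg])
  moreover have "l1_norm ?F * l1_norm ?Y1 \<le> (a * ?d) * (\<rho> + \<delta>)"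
    using nY1 nF by (intro mult_mono) (auto simp: l1_norm_nonneg intro: order_trans[OF l1_norm_nonneg])
  moreover have "l1_norm ?F2 * l1_norm ?M \<le> (a * \<rho>) * ?d"
    using nF2 nM a0 by (intro mult_mono) (auto simp: l1_norm_nonneg intro: order_trans[OF l1_norm_nonneg])
  moreover have "\<delta> * (a * ?d) + (a * ?d) * (\<rho> + \<delta>) + (a * \<rho>) * ?d = a * (2 * \<delta> + 2 * \<rho>) * ?d"
    by (simp add: algebra_simps)
  ultimately show ?thesis using le by linarith
qed

lemma contraction_constants:
  fixes a c \<mu> :: real
  assumes a: "1 \<le> a" and c: "1 \<le> c" and \<mu>: "0 < \<mu>"
  defines "\<rho> \<equiv> min \<mu> (1 / (8 * c * a))" and "\<delta> \<equiv> min \<mu> (1 / (8 * c * a)) / (4 * c)"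
  shows "0 < \<rho>" "0 < \<delta>" "\<rho> \<le> \<mu>" "a * \<rho> \<le> 1/8"
    and "c * (2 * \<delta> + \<delta> * (a * \<rho>) + a * \<rho> * (\<rho> + \<delta>)) \<le> \<rho>"
    and "c * (a * (2 * \<delta> + 2 * \<rho>)) \<le> 1/2"
proof -
  show \<rho>0: "0 < \<rho>" using \<mu> a c by (simp add: \<rho>_def)
  show "0 < \<delta>" "\<rho> \<le> \<mu>" using \<rho>0 c by (simp_all add: \<rho>_def \<delta>_def del: min_less_iff_conj)
  have "c * a * \<rho> \<le> c * a * (1 / (8 * c * a))"
    using a c by (intro mult_left_mono) (auto simp: \<rho>_def)
  then have ca\<rho>: "c * a * \<rho> \<le> 1/8" using a c by simp
  moreover have "a * \<rho> \<le> c * a * \<rho>" using a c \<rho>0 by simp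
  ultimately show a\<rho>: "a * \<rho> \<le> 1/8" by linarith
  have \<delta>: "\<delta> = \<rho> / (4 * c)" by (simp add: \<delta>_def \<rho>_def)
  have c\<delta>: "c * \<delta> = \<rho> / 4" using c by (simp add: \<delta>)
  have \<delta>\<rho>: "\<delta> \<le> \<rho>" using c \<rho>0 by (simp add: \<delta> field_simps)
  have "c * (2 * \<delta> + \<delta> * (a * \<rho>) + a * \<rho> * (\<rho> + \<delta>))
      = 2 * (c * \<delta>) + (c * \<delta>) * (a * \<rho>) + (c * a * \<rho>) * (\<rho> + \<delta>)"
    by (simp add: algebra_simps)
  also have "\<dots> \<le> 2 * (\<rho> / 4) + (\<rho> / 4) * (1/8) + (1/8) * (\<rho> + \<rho>)"
    unfolding c\<delta> using a\<rho> ca\<rho> \<delta>\<rho> \<rho>0 a c \<open>0 < \<delta>\<close>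
    by (intro add_mono mult_mono) auto
  also have "\<dots> \<le> \<rho>" using \<rho>0 by simp
  finally show "c * (2 * \<delta> + \<delta> * (a * \<rho>) + a * \<rho> * (\<rho> + \<delta>)) \<le> \<rho>" .
  have "c * (a * (2 * \<delta> + 2 * \<rho>)) \<le> c * a * \<rho> * 4"
    using \<delta>\<rho> a c by (simp add: algebra_simps)
  then show "c * (a * (2 * \<delta> + 2 * \<rho>)) \<le> 1/2" using ca\<rho> by linarith
qed

lemma nSSP_perturbation_fixpoint:
  assumes A: "A \<in> carrier_mat n n" and ns: "nSSP A" and \<mu>: "0 < \<mu>"
  obtains \<delta> where "0 < \<delta>"
    and "\<And>D Z. D \<in> carrier_mat n n \<Longrightarrow> Z \<in> carrier_mat n n \<Longrightarrow> l1_norm D \<le> \<delta> \<Longrightarrow> l1_norm Z \<le> \<delta> \<Longrightarrow>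
      \<exists>X \<in> carrier_mat n n. l1_norm X \<le> \<mu> \<and> l1_norm (comm_transpose A X) < 1
        \<and> ssp_map A X = perturbation_map A D Z X"
proof -
  obtain R c
    where R: "\<And>W. W \<in> carrier_mat n n \<Longrightarrow> R W \<in> carrier_mat n n \<and> ssp_map A (R W) = W"
    and R_lip: "\<And>W1 W2. W1 \<in> carrier_mat n n \<Longrightarrow> W2 \<in> carrier_mat n n
      \<Longrightarrow> l1_norm (R W1 - R W2) \<le> c * l1_norm (W1 - W2)"
    and c1: "1 \<le> c"
    using ssp_map_right_inverse[OF A ns] by blast
  have R0: "R (0\<^sub>m n n) = 0\<^sub>m n n"
    using R[of "0\<^sub>m n n"] ssp_map_eq_0_imp_eq_0[OF A _ ns] zero_carrier_mat by blast
  have R_le: "l1_norm (R W) \<le> c * l1_norm W" if W: "W \<in> carrier_mat n n" for W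
  proof -
    have "R W - R (0\<^sub>m n n) = R W" using R[OF W] R0 by auto
    moreover have "W - 0\<^sub>m n n = W" using W by auto
    ultimately show ?thesis using R_lip[OF W, of "0\<^sub>m n n"] by simp
  qed
  define a where "a = 2 * l1_norm A + 1"
  have a1: "1 \<le> a" using l1_norm_nonneg[of A] by (simp add: a_def)
  have aA: "2 * l1_norm A \<le> a" by (simp add: a_def)
  define \<rho> where "\<rho> = min \<mu> (1 / (8 * c * a))"
  define \<delta> where "\<delta> = \<rho> / (4 * c)"
  note const = contraction_constants[OF a1 c1 \<mu>, folded \<rho>_def, folded \<delta>_def]
  show thesis
  proof (rule that[OF const(2)])
    fix D Z assume D: "D \<in> carrier_mat n n" and Z: "Z \<in> carrier_mat n n"
      and nD: "l1_norm D \<le> \<delta>" and nZ: "l1_norm Z \<le> \<delta>"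
    let ?G = "perturbation_map A D Z"
    have G: "?G X \<in> carrier_mat n n" if "X \<in> carrier_mat n n" for X
      using perturbation_map_carrier[OF A D Z that] .
    have "\<exists>X \<in> carrier_mat n n. l1_norm X \<le> \<rho> \<and> R (?G X) = X"
    proof (rule contraction_fixpoint[where q = "1/2"])
      fix X assume X: "X \<in> carrier_mat n n" "l1_norm X \<le> \<rho>"
      have "l1_norm (R (?G X)) \<le> c * l1_norm (?G X)" by (rule R_le[OF G[OF X(1)]])
      also have "\<dots> \<le> c * (2 * \<delta> + \<delta> * (a * \<rho>) + a * \<rho> * (\<rho> + \<delta>))"
        using l1_norm_perturbation_map_le[OF A D Z X(1) aA nD nZ X(2)] c1 by (intro mult_left_mono) auto
      also have "\<dots> \<le> \<rho>" by (rule const(5))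
      finally show "R (?G X) \<in> carrier_mat n n \<and> l1_norm (R (?G X)) \<le> \<rho>" using R[OF G[OF X(1)]] by simp
    next
      fix X Y assume X: "X \<in> carrier_mat n n" "l1_norm X \<le> \<rho>" and Y: "Y \<in> carrier_mat n n" "l1_norm Y \<le> \<rho>"
      have "l1_norm (R (?G X) - R (?G Y)) \<le> c * l1_norm (?G X - ?G Y)" by (rule R_lip[OF G[OF X(1)] G[OF Y(1)]])
      also have "\<dots> \<le> c * (a * (2 * \<delta> + 2 * \<rho>) * l1_norm (X - Y))"
        using l1_norm_perturbation_map_diff_le[OF A D Z X(1) Y(1) aA nD nZ X(2) Y(2)] c1
        by (intro mult_left_mono) auto
      also have "\<dots> \<le> 1/2 * l1_norm (X - Y)"
        using mult_right_mono[OF const(6) l1_norm_nonneg[of "X - Y"]] by (simp add: mult.assoc)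
      finally show "l1_norm (R (?G X) - R (?G Y)) \<le> 1/2 * l1_norm (X - Y)" .
    qed (use const(1) in simp_all)
    then obtain X where X: "X \<in> carrier_mat n n" "l1_norm X \<le> \<rho>" "R (?G X) = X" by blast
    have "l1_norm (comm_transpose A X) \<le> a * \<rho>" by (rule l1_norm_comm_transpose_le_mult[OF A X(1) aA X(2)])
    then have "l1_norm (comm_transpose A X) < 1" using const(4) by linarith
    moreover have "ssp_map A X = ?G X" using R[OF G[OF X(1)]] X(3) by simp
    moreover have "l1_norm X \<le> \<mu>" using X(2) const(3) by linarith
    ultimately show "\<exists>X \<in> carrier_mat n n. l1_norm X \<le> \<mu> \<and> l1_norm (comm_transpose A X) < 1 \<and> ssp_map A X = ?G X"
      using X(1) by blast
  qed
qed

lemma char_poly_nSSP_perturbation: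
  assumes A: "A \<in> carrier_mat n n" and ns: "nSSP A" and \<mu>: "0 < \<mu>"
  obtains \<delta> where "0 < \<delta>"
    and "\<And>D Z. D \<in> carrier_mat n n \<Longrightarrow> Z \<in> carrier_mat n n \<Longrightarrow> l1_norm D \<le> \<delta> \<Longrightarrow> l1_norm Z \<le> \<delta> \<Longrightarrow>
      \<exists>X \<in> carrier_mat n n. l1_norm X \<le> \<mu> \<and> char_poly (A + supp_restrict A X + Z) = char_poly (A + D)"
proof -
  obtain \<delta> where \<delta>: "0 < \<delta>" and fix_pt: "\<And>D Z. D \<in> carrier_mat n n \<Longrightarrow> Z \<in> carrier_mat n n \<Longrightarrow>
      l1_norm D \<le> \<delta> \<Longrightarrow> l1_norm Z \<le> \<delta> \<Longrightarrow> \<exists>X \<in> carrier_mat n n. l1_norm X \<le> \<mu>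
        \<and> l1_norm (comm_transpose A X) < 1 \<and> ssp_map A X = perturbation_map A D Z X"
    using nSSP_perturbation_fixpoint[OF A ns \<mu>] by blast
  show thesis
  proof (rule that[OF \<delta>])
    fix D Z assume D: "D \<in> carrier_mat n n" and Z: "Z \<in> carrier_mat n n"
      and "l1_norm D \<le> \<delta>" "l1_norm Z \<le> \<delta>"
    then obtain X where X: "X \<in> carrier_mat n n" "l1_norm X \<le> \<mu>" "l1_norm (comm_transpose A X) < 1"
      and eq: "ssp_map A X = perturbation_map A D Z X" using fix_pt by blast
    let ?F = "comm_transpose A X" and ?M = "supp_restrict A X"
    have F: "?F \<in> carrier_mat n n" and M: "?M \<in> carrier_mat n n" using A X(1) by auto
    have "(1\<^sub>m n + ?F) * (A + ?M + Z) = (A + D) * (1\<^sub>m n + ?F)"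
      by (rule intertwining_identity[OF A D Z F M])
        (use eq in \<open>simp add: ssp_map_def perturbation_map_def\<close>)
    moreover have "A + ?M + Z \<in> carrier_mat n n" using A M Z by auto
    ultimately have "char_poly (A + ?M + Z) = char_poly (A + D)"
      using char_poly_eq_if_intertwined[OF A D _ F X(3)] by blast
    then show "\<exists>X \<in> carrier_mat n n. l1_norm X \<le> \<mu> \<and> char_poly (A + supp_restrict A X + Z) = char_poly (A + D)"
      using X(1,2) by blast
  qed
qed

section \<open>Perturbations of nilpotent matrices\<close>

lemma eigenvalue_nilpotent_eq_0:
  fixes C :: "'a :: field mat"
  assumes C: "C \<in> carrier_mat n n" and nil: "C ^\<^sub>m k = 0\<^sub>m n n" and ev: "eigenvalue C a"
  shows "a = 0"
proof -
  obtain v where v: "eigenvector C v a" using ev unfolding eigenvalue_def by blast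
  then have v: "v \<in> carrier_vec n" "v \<noteq> 0\<^sub>v n" using C unfolding eigenvector_def by auto
  have "a ^ k \<cdot>\<^sub>v v = C ^\<^sub>m k *\<^sub>v v" by (rule eigenvector_pow[OF C \<open>eigenvector C v a\<close>, symmetric])
  also have "\<dots> = 0\<^sub>v n" unfolding nil using v by (intro eq_vecI) (auto simp: scalar_prod_def)
  finally have "a ^ k \<cdot>\<^sub>v v = 0\<^sub>v n" .
  moreover obtain i where i: "i < n" "v $ i \<noteq> 0"
    using v by (metis carrier_vecD eq_vecI index_zero_vec(1) index_zero_vec(2))
  ultimately have "a ^ k * v $ i = 0" by (metis index_smult_vec(1) index_zero_vec(1) carrier_vecD v(1))
  then show "a = 0" using i by simp
qed

lemma char_poly_nilpotent:
  fixes A :: "real mat"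
  assumes A: "A \<in> carrier_mat n n" and nil: "A ^\<^sub>m k = 0\<^sub>m n n"
  shows "char_poly A = [:0,1:]^n"
proof -
  let ?C = "map_mat complex_of_real A"
  have C: "?C \<in> carrier_mat n n" using A by simp
  have C_nil: "?C ^\<^sub>m k = 0\<^sub>m n n"
  proof -
    have "map_mat complex_of_real (0\<^sub>m n n) = 0\<^sub>m n n" by (rule eq_matI) auto
    then show ?thesis using of_real_hom.mat_hom_pow[OF A, of k] nil by metis
  qed
  obtain as where cp: "char_poly ?C = (\<Prod>a\<leftarrow>as. [:-a,1:])" and len: "length as = n"
    using char_poly_factorized[OF C] by blast
  have "a = 0" if a: "a \<in> set as" for a
  proof -
    obtain xs ys where as: "as = xs @ a # ys" using split_list[OF a] by blast
    have "poly (char_poly ?C) a = 0" unfolding cp as by simp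
    then have "eigenvalue ?C a" using eigenvalue_root_char_poly[OF C] by simp
    then show "a = 0" by (rule eigenvalue_nilpotent_eq_0[OF C C_nil])
  qed
  then have "\<forall>y\<in>set as. y = 0" by blast
  then have "replicate (length as) 0 = as" by (rule replicate_length_same)
  then have "as = replicate n 0" using len by simp
  then have "char_poly ?C = [:0,1:]^n" using cp by simp
  then have e: "map_poly complex_of_real (char_poly A) = [:0,1:]^n"
    using of_real_hom.char_poly_hom[OF A] by metis
  show ?thesis
  proof (rule poly_eqI)
    fix i
    have m: "([:0,1:]^n :: 'b::comm_ring_1 poly) = monom 1 n" by (simp add: monom_altdef)
    have "complex_of_real (coeff (char_poly A) i) = coeff ([:0,1:]^n :: complex poly) i"
      using arg_cong[OF e, of "\<lambda>p. coeff p i"] by (simp add: coeff_map_poly)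
    also have "\<dots> = (if n = i then 1 else 0)" unfolding m by (simp add: coeff_monom)
    finally have "coeff (char_poly A) i = (if n = i then 1 else 0)" by (auto split: if_splits)
    then show "coeff (char_poly A) i = coeff ([:0,1:]^n) i" unfolding m by (simp add: coeff_monom)
  qed
qed

lemma jordan_matrix_entry_superdiag:
  assumes "\<forall>(m,a) \<in> set n_as. a = (0::real)"
  and "i < sum_list (map fst n_as)" "j < sum_list (map fst n_as)"
  and "jordan_matrix n_as $$ (i,j) \<noteq> 0"
  shows "j = Suc i"
  using assms
proof (induction n_as arbitrary: i j)
  case Nil then show ?case by simp
next
  case (Cons ma n_as)
  obtain m a where ma: "ma = (m,a)" by force
  let ?N = "sum_list (map fst n_as)"
  have a: "a = 0" using Cons.prems ma by auto
  have J: "jordan_matrix (ma # n_as) $$ (i,j) = (if i < m then if j < m then jordan_block m a $$ (i,j) else 0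
      else if j < m then 0 else jordan_matrix n_as $$ (i - m, j - m))"
    unfolding ma jordan_matrix_Cons using Cons.prems ma by (subst index_mat_four_block) auto
  show ?case
  proof (cases "i < m")
    case True
    then show ?thesis using J Cons.prems a by (auto split: if_splits simp: jordan_block_index)
  next
    case False
    then have j: "\<not> j < m" and nz: "jordan_matrix n_as $$ (i - m, j - m) \<noteq> 0" using J Cons.prems by (auto split: if_splits)
    have N1: "sum_list (map fst (ma # n_as)) = m + ?N" using ma by simp
    have h1: "\<forall>(m,a) \<in> set n_as. a = (0::real)" using Cons.prems(1) by auto
    have h2: "i - m < ?N" using Cons.prems(2) N1 False by linarith
    have h3: "j - m < ?N" using Cons.prems(3) N1 j by linarith
    have "j - m = Suc (i - m)" by (rule Cons.IH[OF h1 h2 h3 nz])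
    then show ?thesis using False j by simp
  qed
qed

lemma nilpotent_similar_superdiagonal:
  fixes A :: "real mat"
  assumes A: "A \<in> carrier_mat n n" and nil: "nilpotent_mat A"
  shows "\<exists>J P Q. J \<in> carrier_mat n n \<and> P \<in> carrier_mat n n \<and> Q \<in> carrier_mat n n \<and> P * Q = 1\<^sub>m n \<and> Q * P = 1\<^sub>m n
     \<and> A = P * J * Q \<and> (\<forall>i<n. \<forall>j<n. J $$ (i,j) \<noteq> 0 \<longrightarrow> j = Suc i)"
proof -
  obtain k where k: "A ^\<^sub>m k = 0\<^sub>m n n" using nil A unfolding nilpotent_mat_def by auto
  have cp: "char_poly A = [:0,1:]^n" by (rule char_poly_nilpotent[OF A k])
  then have "char_poly A = (\<Prod>a\<leftarrow>replicate n (0::real). [:-a,1:])" by simp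
  then obtain n_as where jnf: "jordan_nf A n_as" using jordan_nf_exists[OF A] by blast
  then have sim: "similar_mat A (jordan_matrix n_as)" and nz: "0 \<notin> fst ` set n_as" unfolding jordan_nf_def by auto
  have cpJ: "char_poly A = (\<Prod>(m,a)\<leftarrow>n_as. [:-a,1:]^m)" using jordan_nf_char_poly[OF jnf] .
  have a0: "\<forall>(m,a) \<in> set n_as. a = 0"
  proof (intro ballI, clarify)
    fix m a assume ma: "(m,a) \<in> set n_as"
    then have m: "m > 0" using nz by force
    obtain xs ys where nas: "n_as = xs @ (m,a) # ys" using split_list[OF ma] by blast
    have "poly (char_poly A) a = 0" unfolding cpJ nas using m by (simp add: poly_prod_list)
    then have "a ^ n = 0" unfolding cp by (simp add: poly_power)
    then show "a = 0" by simp
  qed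
  obtain P Q where wit: "similar_mat_wit A (jordan_matrix n_as) P Q" using sim unfolding similar_mat_def by blast
  then have c: "A \<in> carrier_mat n n" "jordan_matrix n_as \<in> carrier_mat n n" "P \<in> carrier_mat n n" "Q \<in> carrier_mat n n"
     "P * Q = 1\<^sub>m n" "Q * P = 1\<^sub>m n" "A = P * jordan_matrix n_as * Q"
    using A unfolding similar_mat_wit_def Let_def by auto
  have N: "sum_list (map fst n_as) = n" using c(2) jordan_matrix_carrier[of n_as] by (metis carrier_matD(1))
  have ent: "\<forall>i<n. \<forall>j<n. jordan_matrix n_as $$ (i,j) \<noteq> 0 \<longrightarrow> j = Suc i"
    using jordan_matrix_entry_superdiag[OF a0] N by blast
  show ?thesis using c ent by blast
qed

definition bidiag_companion :: "nat \<Rightarrow> (nat \<Rightarrow> real) \<Rightarrow> (nat \<Rightarrow> real) \<Rightarrow> real mat" where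
  "bidiag_companion n s r = mat n n (\<lambda>(i,j). (if j = Suc i then s i else 0) + (if i = n - 1 then r j else 0))"

definition bidiag_companion_charmat :: "nat \<Rightarrow> real \<Rightarrow> (nat \<Rightarrow> real) \<Rightarrow> (nat \<Rightarrow> real) \<Rightarrow> real mat" where
  "bidiag_companion_charmat n x s r = mat n n (\<lambda>(i,j). (if i = j then x else 0) - ((if j = Suc i then s i else 0) + (if i = n - 1 then r j else 0)))"

lemma prod_list_map_upt0: "prod_list (map f [0..<m]) = (\<Prod>i<m. (f i :: 'a :: comm_monoid_mult))"
  by (induction m) (simp_all add: lessThan_Suc mult.commute)

lemma cofactor_bidiag_companion_charmat_last:
  assumes n: "n = Suc (Suc m)"
  shows "cofactor (bidiag_companion_charmat n x s r) (n-1) 0 = (\<Prod>i<n-1. s i)"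
proof -
  let ?L = "mat_delete (bidiag_companion_charmat n x s r) (n-1) 0"
  have L: "?L \<in> carrier_mat (n-1) (n-1)" by (simp add: mat_delete_def bidiag_companion_charmat_def)
  have ent: "?L $$ (i,j) = (if i = Suc j then x else 0) - (if j = i then s i else 0)"
    if "i < n-1" "j < n-1" for i j
    unfolding mat_delete_def using that n by (auto simp: bidiag_companion_charmat_def)
  have "det ?L = prod_list (diag_mat ?L)"
  proof (rule det_lower_triangular[OF _ L])
    fix i j assume ij: "i < j" "j < n - 1"
    then have "i < n - 1" by linarith
    then show "?L $$ (i,j) = 0" using ent[OF _ ij(2)] ij by simp
  qed
  also have "\<dots> = (\<Prod>i<n-1. (-1) * s i)"
    unfolding diag_mat_def using ent by (simp add: prod_list_map_upt0 mat_delete_def bidiag_companion_charmat_def)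
  also have "\<dots> = (-1)^(n-1) * (\<Prod>i<n-1. s i)"
    using prod.distrib[of "\<lambda>_. -1" s "{..<n-1}"] by simp
  finally show ?thesis by (simp add: cofactor_def flip: mult.assoc power_add)
qed

lemma sum_prod_tail_Suc:
  "(\<Sum>j<Suc m. r j * (\<Prod>k\<in>{j..<m}. s k) * x^j)
    = r 0 * (\<Prod>k<m. s k) + x * (\<Sum>j<m. r (Suc j) * (\<Prod>k\<in>{j..<m-1}. s (Suc k)) * (x::real)^j)"
proof -
  have shift: "(\<Prod>k\<in>{Suc j..<m}. s k) = (\<Prod>k\<in>{j..<m-1}. s (Suc k))" for j
  proof (cases m)
    case (Suc m')
    then show ?thesis by (simp only: prod.atLeast_Suc_lessThan_Suc_shift comp_def diff_Suc_1)
  qed simp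
  have "(\<Sum>j<Suc m. r j * (\<Prod>k\<in>{j..<m}. s k) * x^j)
      = r 0 * (\<Prod>k\<in>{0..<m}. s k) + (\<Sum>j<m. r (Suc j) * (\<Prod>k\<in>{Suc j..<m}. s k) * x^(Suc j))"
    by (simp only: sum.lessThan_Suc_shift power_0 mult_1_right)
  also have "(\<Sum>j<m. r (Suc j) * (\<Prod>k\<in>{Suc j..<m}. s k) * x^(Suc j))
      = x * (\<Sum>j<m. r (Suc j) * (\<Prod>k\<in>{j..<m-1}. s (Suc k)) * x^j)"
    unfolding shift sum_distrib_left by (intro sum.cong) (simp_all add: algebra_simps)
  finally show ?thesis by (simp add: atLeast0LessThan)
qed

lemma det_bidiag_companion_charmat:
  "det (bidiag_companion_charmat n x s r) = x^n - (\<Sum>j<n. r j * (\<Prod>k\<in>{j..<n-1}. s k) * x^j)"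
proof (induction n arbitrary: s r rule: less_induct)
  case (less n)
  show ?case
  proof (cases "n \<le> 1")
    case True
    then consider "n = 0" | "n = 1" by linarith
    then show ?thesis
    proof cases
      case 1 then show ?thesis by (simp add: bidiag_companion_charmat_def)
    next
      case 2
      have "det (bidiag_companion_charmat n x s r) = bidiag_companion_charmat n x s r $$ (0,0)" using 2 by (intro det_single) (simp add: bidiag_companion_charmat_def)
      then show ?thesis using 2 by (simp add: bidiag_companion_charmat_def)
    qed
  next
    case False
    define m where "m = n - 2"
    have n: "n = Suc (Suc m)" using False unfolding m_def by simp
    let ?B = "bidiag_companion_charmat n x s r"
    have B: "?B \<in> carrier_mat n n" by (simp add: bidiag_companion_charmat_def)
    have "det ?B = (\<Sum>i<n. ?B $$ (i,0) * cofactor ?B i 0)"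
      using laplace_expansion_column[OF B, of 0] n by simp
    also have "\<dots> = (\<Sum>i\<in>{0, n-1}. ?B $$ (i,0) * cofactor ?B i 0)"
    proof (rule sum.mono_neutral_right)
      show "\<forall>i\<in>{..<n} - {0, n-1}. ?B $$ (i,0) * cofactor ?B i 0 = 0"
        using n by (auto simp: bidiag_companion_charmat_def)
    qed (use n in auto)
    also have "\<dots> = ?B $$ (0,0) * cofactor ?B 0 0 + ?B $$ (n-1,0) * cofactor ?B (n-1) 0"
      using n by simp
    also have "?B $$ (0,0) = x" using n by (simp add: bidiag_companion_charmat_def)
    also have "?B $$ (n-1,0) = - r 0" using n by (simp add: bidiag_companion_charmat_def)
    also have "cofactor ?B 0 0 = det (bidiag_companion_charmat (n-1) x (\<lambda>k. s (Suc k)) (\<lambda>k. r (Suc k)))"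
    proof -
      have "mat_delete ?B 0 0 = bidiag_companion_charmat (n-1) x (\<lambda>k. s (Suc k)) (\<lambda>k. r (Suc k))"
        unfolding mat_delete_def using n by (intro eq_matI) (auto simp: bidiag_companion_charmat_def)
      then show ?thesis by (simp add: cofactor_def)
    qed
    also have "cofactor ?B (n-1) 0 = (\<Prod>i<n-1. s i)" by (rule cofactor_bidiag_companion_charmat_last[OF n])
    finally have d: "det ?B = x * det (bidiag_companion_charmat (n-1) x (\<lambda>k. s (Suc k)) (\<lambda>k. r (Suc k))) + - r 0 * (\<Prod>i<n-1. s i)" .
    have IH: "det (bidiag_companion_charmat (n-1) x (\<lambda>k. s (Suc k)) (\<lambda>k. r (Suc k))) =
       x^(n-1) - (\<Sum>j<n-1. r (Suc j) * (\<Prod>k\<in>{j..<n-1-1}. s (Suc k)) * x^j)"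
      using less.IH[of "n-1"] n by simp
    have rs: "(\<Sum>j<n. r j * (\<Prod>k\<in>{j..<n-1}. s k) * x^j)
        = r 0 * (\<Prod>k<n-1. s k) + x * (\<Sum>j<n-1. r (Suc j) * (\<Prod>k\<in>{j..<n-1-1}. s (Suc k)) * x^j)"
      using sum_prod_tail_Suc[where r = r and m = "n-1" and s = s and x = x] n by simp
    have xn: "x^n = x * x^(n-1)" using n by simp
    show ?thesis unfolding d IH rs xn by (simp add: algebra_simps)
  qed
qed

lemma char_poly_bidiag_companion:
  "char_poly (bidiag_companion n s r) = monom 1 n - (\<Sum>j<n. monom (r j * (\<Prod>k\<in>{j..<n-1}. s k)) j)"
proof -
  have "poly (char_poly (bidiag_companion n s r)) x = poly (monom 1 n - (\<Sum>j<n. monom (r j * (\<Prod>k\<in>{j..<n-1}. s k)) j)) x" for x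
  proof -
    have B: "bidiag_companion n s r \<in> carrier_mat n n" by (simp add: bidiag_companion_def)
    have "poly (char_poly (bidiag_companion n s r)) x = det (- char_matrix (bidiag_companion n s r) x)"
      by (rule char_poly_matrix[OF B])
    also have "- char_matrix (bidiag_companion n s r) x = bidiag_companion_charmat n x s r"
      by (intro eq_matI) (auto simp: char_matrix_def bidiag_companion_def bidiag_companion_charmat_def)
    finally show ?thesis by (simp add: det_bidiag_companion_charmat poly_sum poly_monom mult.assoc)
  qed
  then show ?thesis by (simp add: poly_eq_poly_eq_iff[symmetric] fun_eq_iff)
qed

lemma char_poly_bidiag_companion_eq:
  fixes p :: "real poly"
  assumes s: "\<And>k. s k \<noteq> 0" and mon: "monic p" and deg: "degree p = n"
  shows "char_poly (bidiag_companion n s (\<lambda>j. - coeff p j / (\<Prod>k\<in>{j..<n-1}. s k))) = p"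
proof (rule poly_eqI)
  fix i
  define \<sigma> where "\<sigma> j = (\<Prod>k\<in>{j..<n-1}. s k)" for j
  have \<sigma>0: "\<sigma> j \<noteq> 0" for j unfolding \<sigma>_def using s by (simp add: prod_zero_iff)
  let ?M = "bidiag_companion n s (\<lambda>j. - coeff p j / \<sigma> j)"
  have "coeff (char_poly ?M) i = (if n = i then 1 else 0) - (\<Sum>j<n. if j = i then - coeff p j / \<sigma> j * \<sigma> j else 0)"
    unfolding char_poly_bidiag_companion \<sigma>_def by (simp add: coeff_sum coeff_monom)
  also have "(\<Sum>j<n. if j = i then - coeff p j / \<sigma> j * \<sigma> j else 0) = (if i < n then - coeff p i else 0)"
    using \<sigma>0[of i] by (simp add: sum.delta')
  finally have e: "coeff (char_poly ?M) i = (if n = i then 1 else 0) - (if i < n then - coeff p i else 0)" .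
  have "coeff (char_poly ?M) i = coeff p i"
  proof (cases "i < n")
    case False
    then show ?thesis using e mon deg by (cases "i = n") (auto simp: coeff_eq_0)
  qed (use e in simp)
  then show "coeff (char_poly (bidiag_companion n s (\<lambda>j. - coeff p j / (\<Prod>k\<in>{j..<n-1}. s k)))) i = coeff p i"
    by (simp add: \<sigma>_def)
qed

lemma l1_norm_bidiag_companion_diff_le:
  assumes J: "J \<in> carrier_mat n n"
    and J_superdiag: "\<And>i j. i < n \<Longrightarrow> j < n \<Longrightarrow> J $$ (i,j) \<noteq> 0 \<Longrightarrow> j = Suc i"
    and s: "\<And>i. \<bar>s i - J $$ (i, Suc i)\<bar> \<le> \<epsilon>"
  shows "l1_norm (bidiag_companion n s r - J) \<le> real n * \<epsilon> + (\<Sum>j<n. \<bar>r j\<bar>)"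
proof -
  let ?D = "bidiag_companion n s r - J"
  have \<epsilon>0: "0 \<le> \<epsilon>" using s[of 0] by linarith
  have ent: "\<bar>?D $$ (i,j)\<bar> \<le> (if j = Suc i then \<epsilon> else 0) + (if i = n - 1 then \<bar>r j\<bar> else 0)"
    if ij: "i < n" "j < n" for i j
  proof -
    have d: "?D $$ (i,j) = ((if j = Suc i then s i else 0) + (if i = n - 1 then r j else 0)) - J $$ (i,j)"
      using ij J by (simp add: bidiag_companion_def)
    show ?thesis
    proof (cases "j = Suc i")
      case True
      then show ?thesis
        unfolding d using s[of i] abs_ge_self[of "r j"] abs_ge_minus_self[of "r j"] by (auto simp: abs_le_iff)
    next
      case False
      then have "J $$ (i,j) = 0" using J_superdiag ij by blast
      then show ?thesis unfolding d using False by auto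
    qed
  qed
  have "l1_norm ?D = (\<Sum>i<n. \<Sum>j<n. \<bar>?D $$ (i,j)\<bar>)"
    using J by (simp add: l1_norm_def bidiag_companion_def)
  also have "\<dots> \<le> (\<Sum>i<n. \<Sum>j<n. (if j = Suc i then \<epsilon> else 0) + (if i = n - 1 then \<bar>r j\<bar> else 0))"
    by (intro sum_mono ent) auto
  also have "\<dots> = (\<Sum>i<n. \<Sum>j<n. if j = Suc i then \<epsilon> else 0) + (\<Sum>i<n. \<Sum>j<n. if i = n - 1 then \<bar>r j\<bar> else 0)"
    by (simp only: sum.distrib)
  also have "(\<Sum>i<n. \<Sum>j<n. if i = n - 1 then \<bar>r j\<bar> else 0) = (\<Sum>i<n. if i = n - 1 then (\<Sum>j<n. \<bar>r j\<bar>) else 0)"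
    by (intro sum.cong refl) simp
  also have "(\<Sum>i<n. \<Sum>j<n. if j = Suc i then \<epsilon> else 0) \<le> (\<Sum>i<n. \<epsilon>)"
    by (intro sum_mono) (simp add: sum.delta' \<epsilon>0)
  also have "(\<Sum>i<n. if i = n - 1 then (\<Sum>j<n. \<bar>r j\<bar>) else 0) \<le> (\<Sum>j<n. \<bar>r j\<bar>)"
    by (cases "n = 0") (simp_all add: sum.delta' sum_nonneg)
  finally show ?thesis by simp
qed

lemma char_poly_similar_perturbation:
  assumes P: "P \<in> carrier_mat n n" and Q: "Q \<in> carrier_mat n n" and J: "J \<in> carrier_mat n n"
    and M: "M \<in> carrier_mat n n" and PQ: "P * Q = 1\<^sub>m n" and QP: "Q * P = 1\<^sub>m n" and A: "A = P * J * Q"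
  shows "char_poly (A + P * (M - J) * Q) = char_poly M"
proof -
  define D0 where "D0 = M - J"
  have D0: "D0 \<in> carrier_mat n n" unfolding D0_def using J by (rule minus_carrier_mat)
  have "J + D0 = M" using M J by (intro eq_matI) (auto simp: D0_def)
  then have "P * M * Q = P * (J + D0) * Q" by simp
  also have "P * (J + D0) = P * J + P * D0" by (rule mult_add_distrib_mat[OF P J D0])
  also have "(P * J + P * D0) * Q = P * J * Q + P * D0 * Q"
    by (rule add_mult_distrib_mat) (use P J D0 Q in auto)
  finally have AD: "A + P * D0 * Q = P * M * Q" unfolding A by simp
  have "similar_mat_wit (P * M * Q) M P Q"
    unfolding similar_mat_wit_def Let_def using M P Q PQ QP by (auto simp del: assoc_mult_mat)
  then have "char_poly (P * M * Q) = char_poly M" by (intro char_poly_similar) (auto simp: similar_mat_def)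
  then show ?thesis unfolding D0_def[symmetric] AD .
qed

lemma mult_div_mult_succ_le:
  fixes K x \<eta> :: real
  assumes "0 < K" "0 \<le> x" "0 \<le> \<eta>"
  shows "K * x * (\<eta> / (2 * K * (x + 1))) \<le> \<eta> / 2"
proof -
  have "0 < K * (x + 1)" using assms by simp
  then show ?thesis using assms by (simp add: field_split_simps algebra_simps)
qed

lemma nilpotent_perturbation_char_poly:
  fixes A :: "real mat"
  assumes A: "A \<in> carrier_mat n n" and nil: "nilpotent_mat A" and \<eta>: "0 < \<eta>"
  obtains \<delta> where "0 < \<delta>"
    and "\<And>p. monic p \<Longrightarrow> degree p = n \<Longrightarrow> (\<forall>j<n. \<bar>coeff p j\<bar> \<le> \<delta>) \<Longrightarrow>
      \<exists>D \<in> carrier_mat n n. l1_norm D \<le> \<eta> \<and> char_poly (A + D) = p"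
proof -
  obtain J P Q where J: "J \<in> carrier_mat n n" and P: "P \<in> carrier_mat n n" and Q: "Q \<in> carrier_mat n n"
    and PQ: "P * Q = 1\<^sub>m n" and QP: "Q * P = 1\<^sub>m n" and AJ: "A = P * J * Q"
    and J_superdiag: "\<And>i j. i < n \<Longrightarrow> j < n \<Longrightarrow> J $$ (i,j) \<noteq> 0 \<Longrightarrow> j = Suc i"
    using nilpotent_similar_superdiagonal[OF A nil] by blast
  define K where "K = (l1_norm P + 1) * (l1_norm Q + 1)"
  have K: "0 < K" using l1_norm_nonneg[of P] l1_norm_nonneg[of Q] by (simp add: K_def)
  have PQ_le: "l1_norm P * l1_norm Q \<le> K"
    using l1_norm_nonneg[of P] l1_norm_nonneg[of Q] unfolding K_def by (intro mult_mono) auto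
  define \<epsilon> where "\<epsilon> = \<eta> / (2 * K * (real n + 1))"
  have \<epsilon>0: "0 < \<epsilon>" using \<eta> K by (simp add: \<epsilon>_def)
  \<comment> \<open>Entries of the Jordan superdiagonal that vanish are replaced by \<open>\<epsilon>\<close>: then every
    coefficient of the last row can be solved for, since all products of the superdiagonal are nonzero.\<close>
  define s where "s i = (if J $$ (i, Suc i) = 0 then \<epsilon> else J $$ (i, Suc i))" for i
  have s0: "s i \<noteq> 0" for i using \<epsilon>0 by (simp add: s_def)
  have s_close: "\<bar>s i - J $$ (i, Suc i)\<bar> \<le> \<epsilon>" for i using \<epsilon>0 by (simp add: s_def)
  define \<sigma> where "\<sigma> j = (\<Prod>k\<in>{j..<n-1}. s k)" for j
  have \<sigma>0: "\<sigma> j \<noteq> 0" for j unfolding \<sigma>_def using s0 by (simp add: prod_zero_iff)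
  define \<kappa> where "\<kappa> = (\<Sum>j<n. 1 / \<bar>\<sigma> j\<bar>)"
  have \<kappa>0: "0 \<le> \<kappa>" unfolding \<kappa>_def by (intro sum_nonneg) auto
  define \<delta> where "\<delta> = \<eta> / (2 * K * (\<kappa> + 1))"
  have \<delta>0: "0 < \<delta>" using \<eta> K \<kappa>0 by (simp add: \<delta>_def)
  show thesis
  proof (rule that[OF \<delta>0])
    fix p :: "real poly" assume mon: "monic p" and deg: "degree p = n" and small: "\<forall>j<n. \<bar>coeff p j\<bar> \<le> \<delta>"
    define r where "r j = - coeff p j / \<sigma> j" for j
    define M where "M = bidiag_companion n s r"
    define D where "D = P * (M - J) * Q"
    have M: "M \<in> carrier_mat n n" by (simp add: M_def bidiag_companion_def)
    have MJ: "M - J \<in> carrier_mat n n" using J by (rule minus_carrier_mat)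
    have D: "D \<in> carrier_mat n n" using P Q MJ by (simp add: D_def)
    have "char_poly (A + D) = char_poly M"
      unfolding D_def by (rule char_poly_similar_perturbation[OF P Q J M PQ QP AJ])
    also have "char_poly M = p"
      unfolding M_def r_def \<sigma>_def by (rule char_poly_bidiag_companion_eq[OF s0 mon deg])
    finally have cp: "char_poly (A + D) = p" .
    have "(\<Sum>j<n. \<bar>r j\<bar>) \<le> (\<Sum>j<n. \<delta> * (1 / \<bar>\<sigma> j\<bar>))"
      using small \<sigma>0 by (intro sum_mono) (simp add: r_def abs_div divide_right_mono)
    then have nMJ: "l1_norm (M - J) \<le> real n * \<epsilon> + \<delta> * \<kappa>"
      using l1_norm_bidiag_companion_diff_le[OF J J_superdiag s_close, of r]
      by (simp add: M_def \<kappa>_def sum_distrib_left)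
    have "l1_norm D \<le> l1_norm P * l1_norm (M - J) * l1_norm Q"
      unfolding D_def using l1_norm_mult_le[OF mult_carrier_mat[OF P MJ] Q] l1_norm_mult_le[OF P MJ]
        l1_norm_nonneg[of Q] by (meson mult_right_mono order_trans)
    also have "\<dots> = (l1_norm P * l1_norm Q) * l1_norm (M - J)" by (simp add: algebra_simps)
    also have "\<dots> \<le> K * (real n * \<epsilon> + \<delta> * \<kappa>)"
      using PQ_le nMJ K l1_norm_nonneg[of P] l1_norm_nonneg[of Q] l1_norm_nonneg[of "M - J"]
      by (intro mult_mono) auto
    also have "\<dots> = K * real n * \<epsilon> + K * \<kappa> * \<delta>" by (simp add: algebra_simps)
    also have "\<dots> \<le> \<eta> / 2 + \<eta> / 2"
      unfolding \<epsilon>_def \<delta>_def using K \<kappa>0 \<eta> by (intro add_mono mult_div_mult_succ_le) auto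
    finally show "\<exists>D \<in> carrier_mat n n. l1_norm D \<le> \<eta> \<and> char_poly (A + D) = p" using D cp by auto
  qed
qed

section \<open>Scaling and sign patterns\<close>

lemma char_poly_smult_eval:
  fixes B :: "real mat"
  assumes B: "B \<in> carrier_mat n n" and t: "t \<noteq> 0"
  shows "poly (char_poly (t \<cdot>\<^sub>m B)) x = t^n * poly (char_poly B) (x / t)"
proof -
  have tB: "t \<cdot>\<^sub>m B \<in> carrier_mat n n" using B by simp
  have "poly (char_poly (t \<cdot>\<^sub>m B)) x = det (- char_matrix (t \<cdot>\<^sub>m B) x)" by (rule char_poly_matrix[OF tB])
  also have "- char_matrix (t \<cdot>\<^sub>m B) x = t \<cdot>\<^sub>m (- char_matrix B (x / t))"
    using B t by (intro eq_matI) (auto simp: char_matrix_def algebra_simps)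
  also have "det \<dots> = t ^ n * det (- char_matrix B (x / t))" using B by (simp add: char_matrix_def)
  also have "det (- char_matrix B (x / t)) = poly (char_poly B) (x / t)" by (rule char_poly_matrix[OF B, symmetric])
  finally show ?thesis .
qed

lemma sign_of_mult_pos: "t > 0 \<Longrightarrow> sign_of (t * x) = sign_of x"
  by (auto simp: sign_of_def zero_less_mult_iff mult_less_0_iff)

lemma in_qual_class_smult:
  "in_qual_class M P \<Longrightarrow> t > 0 \<Longrightarrow> in_qual_class (t \<cdot>\<^sub>m M) P"
  unfolding in_qual_class_def by (auto simp: sign_of_mult_pos)

definition rescale_poly :: "real \<Rightarrow> nat \<Rightarrow> real poly \<Rightarrow> real poly" where
  "rescale_poly t n p = Polynomial.smult (inverse (t ^ n)) (p \<circ>\<^sub>p [:0, t:])"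

lemma coeff_rescale_poly: "coeff (rescale_poly t n p) j = t ^ j * coeff p j / t ^ n"
  by (simp add: rescale_poly_def coeff_pcompose_linear divide_inverse)

lemma rescale_poly_monic:
  assumes mon: "monic p" and deg: "degree p = n" and t: "t \<noteq> 0"
  shows "monic (rescale_poly t n p)" and "degree (rescale_poly t n p) = n"
proof -
  have "coeff (rescale_poly t n p) n = 1" using mon deg[symmetric] t by (simp add: coeff_rescale_poly)
  moreover have "degree (rescale_poly t n p) \<le> n"
    by (rule degree_le) (use deg in \<open>auto simp: coeff_rescale_poly coeff_eq_0\<close>)
  ultimately show "degree (rescale_poly t n p) = n" "monic (rescale_poly t n p)"
    using le_degree[of "rescale_poly t n p" n] by (auto intro: antisym)
qed

lemma abs_coeff_rescale_poly_le:
  assumes t: "1 \<le> t" and j: "j < n"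
  shows "\<bar>coeff (rescale_poly t n p) j\<bar> \<le> \<bar>coeff p j\<bar> / t"
proof -
  have "t ^ Suc j \<le> t ^ n" using t j by (intro power_increasing) auto
  then have "t ^ j / t ^ n \<le> 1 / t" using t by (simp add: field_simps)
  then have "\<bar>coeff p j\<bar> * (t ^ j / t ^ n) \<le> \<bar>coeff p j\<bar> * (1 / t)" by (rule mult_left_mono) simp
  then show ?thesis using t by (simp add: coeff_rescale_poly abs_mult mult.commute)
qed

lemma char_poly_smult_rescale_poly:
  assumes B: "B \<in> carrier_mat n n" and t: "t \<noteq> 0" and cp: "char_poly B = rescale_poly t n p"
  shows "char_poly (t \<cdot>\<^sub>m B) = p"
proof -
  have "poly p x = t ^ n * poly (rescale_poly t n p) (x / t)" for x
    using t by (simp add: rescale_poly_def poly_pcompose)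
  then have "poly (char_poly (t \<cdot>\<^sub>m B)) x = poly p x" for x
    using char_poly_smult_eval[OF B t, of x] cp by simp
  then show ?thesis by (simp add: poly_eq_poly_eq_iff[symmetric] fun_eq_iff)
qed

lemma spectrally_arbitrary_if_small_coeffs:
  assumes sq: "dim_row P' = n" "dim_col P' = n" and \<delta>: "0 < \<delta>"
    and small: "\<And>p. monic p \<Longrightarrow> degree p = n \<Longrightarrow> (\<forall>j<n. \<bar>coeff p j\<bar> \<le> \<delta>) \<Longrightarrow> \<exists>M. in_qual_class M P' \<and> char_poly M = p"
  shows "spectrally_arbitrary P'"
  unfolding spectrally_arbitrary_def
proof (intro conjI allI impI)
  show "dim_row P' = dim_col P'" using sq by simp
  fix p :: "real poly" assume "monic p \<and> degree p = dim_row P'"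
  then have mon: "monic p" and deg: "degree p = n" using sq by auto
  define C where "C = (\<Sum>j<n. \<bar>coeff p j\<bar>)"
  define t where "t = 1 + C / \<delta>"
  have C0: "0 \<le> C" unfolding C_def by (intro sum_nonneg) auto
  have t1: "1 \<le> t" using C0 \<delta> by (simp add: t_def)
  let ?q = "rescale_poly t n p"
  have "\<bar>coeff ?q j\<bar> \<le> \<delta>" if j: "j < n" for j
  proof -
    have "\<bar>coeff p j\<bar> \<le> C" unfolding C_def using j by (intro member_le_sum) auto
    also have "C \<le> \<delta> * t" using \<delta> by (simp add: t_def field_simps)
    finally have "\<bar>coeff p j\<bar> / t \<le> \<delta>" using t1 by (simp add: divide_le_eq)
    then show ?thesis using abs_coeff_rescale_poly_le[OF t1 j, of p] by linarith
  qed
  moreover have "monic ?q" "degree ?q = n" using rescale_poly_monic[OF mon deg] t1 by auto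
  ultimately obtain M where M: "in_qual_class M P'" "char_poly M = ?q"
    using small by blast
  have "M \<in> carrier_mat n n" using M(1) sq unfolding in_qual_class_def by auto
  then have "char_poly (t \<cdot>\<^sub>m M) = p" using t1 M(2) by (intro char_poly_smult_rescale_poly) auto
  moreover have "in_qual_class (t \<cdot>\<^sub>m M) P'" using in_qual_class_smult[OF M(1)] t1 by simp
  ultimately show "\<exists>A. in_qual_class A P' \<and> char_poly A = p" by blast
qed

definition sign_value :: "sign \<Rightarrow> real" where
  "sign_value s = (case s of SPos \<Rightarrow> 1 | SNeg \<Rightarrow> -1 | SZero \<Rightarrow> 0)"

lemma sign_of_mult_sign_value: "0 < t \<Longrightarrow> sign_of (t * sign_value s) = s"
  by (cases s) (auto simp: sign_value_def sign_of_def mult_less_0_iff)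

lemma abs_sign_value_le: "\<bar>sign_value s\<bar> \<le> 1"
  by (cases s) (auto simp: sign_value_def)

definition fill_zeros :: "real mat \<Rightarrow> sign mat \<Rightarrow> real \<Rightarrow> real mat" where
  "fill_zeros A P \<zeta> = mat (dim_row A) (dim_col A)
     (\<lambda>(i,j). if A $$ (i,j) = 0 then \<zeta> * sign_value (P $$ (i,j)) else 0)"

lemma fill_zeros_carrier: "fill_zeros A P \<zeta> \<in> carrier_mat (dim_row A) (dim_col A)"
  by (simp add: fill_zeros_def)

lemma l1_norm_fill_zeros_le:
  assumes "0 \<le> \<zeta>"
  shows "l1_norm (fill_zeros A P \<zeta>) \<le> real (dim_row A * dim_col A) * \<zeta>"
proof -
  have "l1_norm (fill_zeros A P \<zeta>)
      = (\<Sum>i<dim_row A. \<Sum>j<dim_col A. \<bar>if A $$ (i,j) = 0 then \<zeta> * sign_value (P $$ (i,j)) else 0\<bar>)"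
    by (simp add: l1_norm_def fill_zeros_def)
  also have "\<dots> \<le> (\<Sum>i<dim_row A. \<Sum>j<dim_col A. \<zeta>)"
    using assms mult_left_mono[OF abs_sign_value_le assms] by (intro sum_mono) (auto simp: abs_mult)
  finally show ?thesis by simp
qed

lemma fill_zeros_small:
  assumes "0 < \<delta>"
  obtains \<zeta> where "0 < \<zeta>" and "l1_norm (fill_zeros A P \<zeta>) \<le> \<delta>"
proof -
  define N where "N = real (dim_row A * dim_col A)"
  have N: "0 \<le> N" by (simp add: N_def)
  have "0 < \<delta> / (N + 1)" using assms N by simp
  moreover have "l1_norm (fill_zeros A P (\<delta> / (N + 1))) \<le> N * (\<delta> / (N + 1))"
    using l1_norm_fill_zeros_le[OF less_imp_le[OF calculation], of A P] by (simp add: N_def)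
  moreover have "N * (\<delta> / (N + 1)) \<le> \<delta>" using assms N by (simp add: field_simps)
  ultimately show thesis using that by (meson order_trans)
qed

lemma min_abs_nonzero_entry:
  fixes A :: "real mat"
  obtains m where "0 < m"
    and "\<And>i j. i < dim_row A \<Longrightarrow> j < dim_col A \<Longrightarrow> A $$ (i,j) \<noteq> 0 \<Longrightarrow> m \<le> \<bar>A $$ (i,j)\<bar>"
proof -
  define S where "S = insert 1 ((\<lambda>(i,j). \<bar>A $$ (i,j)\<bar>) ` {(i,j). i < dim_row A \<and> j < dim_col A \<and> A $$ (i,j) \<noteq> 0})"
  have "finite {(i,j). i < dim_row A \<and> j < dim_col A \<and> A $$ (i,j) \<noteq> 0}"
    by (rule finite_subset[of _ "{..<dim_row A} \<times> {..<dim_col A}"]) auto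
  then have S: "finite S" "S \<noteq> {}" by (simp_all add: S_def)
  have "0 < Min S" using S by (auto simp: S_def)
  moreover have "Min S \<le> \<bar>A $$ (i,j)\<bar>" if "i < dim_row A" "j < dim_col A" "A $$ (i,j) \<noteq> 0" for i j
    using S(1) that by (intro Min_le) (auto simp: S_def)
  ultimately show thesis using that by blast
qed

lemma in_qual_class_superpattern_perturbation:
  assumes A: "in_qual_class A P" and sup: "superpattern P' P" and \<zeta>: "0 < \<zeta>"
    and X: "X \<in> carrier_mat (dim_row A) (dim_col A)"
    and min: "\<And>i j. i < dim_row A \<Longrightarrow> j < dim_col A \<Longrightarrow> A $$ (i,j) \<noteq> 0 \<Longrightarrow> m \<le> \<bar>A $$ (i,j)\<bar>"
    and small: "l1_norm X < m"
  shows "in_qual_class (A + supp_restrict A X + fill_zeros A P' \<zeta>) P'"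
  unfolding in_qual_class_def
proof (intro conjI allI impI)
  let ?M = "A + supp_restrict A X + fill_zeros A P' \<zeta>"
  have dims: "dim_row P' = dim_row A" "dim_col P' = dim_col A"
    using A sup unfolding in_qual_class_def superpattern_def by auto
  show "dim_row ?M = dim_row P'" "dim_col ?M = dim_col P'" using dims by (simp_all add: fill_zeros_def)
  fix i j assume "i < dim_row P'" "j < dim_col P'"
  then have ij: "i < dim_row A" "j < dim_col A" using dims by auto
  have M: "?M $$ (i,j) = A $$ (i,j) + (if A $$ (i,j) = 0 then 0 else X $$ (i,j))
      + (if A $$ (i,j) = 0 then \<zeta> * sign_value (P' $$ (i,j)) else 0)"
    using ij by (simp add: supp_restrict_def fill_zeros_def)
  show "sign_of (?M $$ (i,j)) = P' $$ (i,j)"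
  proof (cases "A $$ (i,j) = 0")
    case True
    then show ?thesis using M sign_of_mult_sign_value[OF \<zeta>] by simp
  next
    case False
    have "sign_of (?M $$ (i,j)) = sign_of (A $$ (i,j))"
      using M False abs_index_le_l1_norm[of i X j] X ij small min[OF ij False]
      by (auto simp: sign_of_def abs_if split: if_splits)
    also have AP: "\<dots> = P $$ (i,j)" using A ij unfolding in_qual_class_def by auto
    also have "\<dots> = P' $$ (i,j)"
    proof -
      have "P $$ (i,j) \<noteq> SZero" using AP False by (auto simp: sign_of_def split: if_splits)
      then show ?thesis using sup A ij unfolding superpattern_def in_qual_class_def by auto
    qed
    finally show ?thesis .
  qed
qed

lemma nilpotent_nSSP_perturbation_char_poly:
  assumes A: "A \<in> carrier_mat n n" and nil: "nilpotent_mat A" and ns: "nSSP A" and \<mu>: "0 < \<mu>"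
  obtains \<delta> \<epsilon> where "0 < \<delta>" and "0 < \<epsilon>"
    and "\<And>Z p. Z \<in> carrier_mat n n \<Longrightarrow> l1_norm Z \<le> \<delta> \<Longrightarrow> monic p \<Longrightarrow> degree p = n \<Longrightarrow>
      \<forall>j<n. \<bar>coeff p j\<bar> \<le> \<epsilon> \<Longrightarrow>
      \<exists>X \<in> carrier_mat n n. l1_norm X \<le> \<mu> \<and> char_poly (A + supp_restrict A X + Z) = p"
proof -
  obtain \<delta> where \<delta>: "0 < \<delta>" and perturb: "\<And>D Z. D \<in> carrier_mat n n \<Longrightarrow> Z \<in> carrier_mat n n \<Longrightarrow>
      l1_norm D \<le> \<delta> \<Longrightarrow> l1_norm Z \<le> \<delta> \<Longrightarrow>
      \<exists>X \<in> carrier_mat n n. l1_norm X \<le> \<mu> \<and> char_poly (A + supp_restrict A X + Z) = char_poly (A + D)"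
    using char_poly_nSSP_perturbation[OF A ns \<mu>] by blast
  obtain \<epsilon> where \<epsilon>: "0 < \<epsilon>" and target: "\<And>p. monic p \<Longrightarrow> degree p = n \<Longrightarrow> \<forall>j<n. \<bar>coeff p j\<bar> \<le> \<epsilon> \<Longrightarrow>
      \<exists>D \<in> carrier_mat n n. l1_norm D \<le> \<delta> \<and> char_poly (A + D) = p"
    using nilpotent_perturbation_char_poly[OF A nil \<delta>] by blast
  show thesis
  proof (rule that[OF \<delta> \<epsilon>])
    fix Z p assume Z: "Z \<in> carrier_mat n n" "l1_norm Z \<le> \<delta>"
      and p: "monic p" "degree p = n" "\<forall>j<n. \<bar>coeff p j\<bar> \<le> \<epsilon>"
    obtain D where "D \<in> carrier_mat n n" "l1_norm D \<le> \<delta>" "char_poly (A + D) = p" using target[OF p] by blast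
    then show "\<exists>X \<in> carrier_mat n n. l1_norm X \<le> \<mu> \<and> char_poly (A + supp_restrict A X + Z) = p"
      using perturb[of D Z] Z by auto
  qed
qed

theorem corollary5p6:
  fixes n :: nat and P :: "sign mat" and A :: "real mat"
  assumes "P \<in> carrier_mat n n"
    and "in_qual_class A P"
    and "nilpotent_mat A"
    and "nSSP A"
  shows "\<forall>P'. superpattern P' P \<longrightarrow> spectrally_arbitrary P'"
proof (intro allI impI)
  fix P' assume sup: "superpattern P' P"
  have A: "A \<in> carrier_mat n n" and P': "dim_row P' = n" "dim_col P' = n"
    using assms(1,2) sup unfolding in_qual_class_def superpattern_def by auto
  obtain m where m: "0 < m" and min: "\<And>i j. i < dim_row A \<Longrightarrow> j < dim_col A \<Longrightarrow> A $$ (i,j) \<noteq> 0 \<Longrightarrow> m \<le> \<bar>A $$ (i,j)\<bar>"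
    using min_abs_nonzero_entry by blast
  obtain \<delta> \<epsilon> where \<delta>: "0 < \<delta>" and \<epsilon>: "0 < \<epsilon>" and realize: "\<And>Z p. Z \<in> carrier_mat n n \<Longrightarrow>
      l1_norm Z \<le> \<delta> \<Longrightarrow> monic p \<Longrightarrow> degree p = n \<Longrightarrow> \<forall>j<n. \<bar>coeff p j\<bar> \<le> \<epsilon> \<Longrightarrow>
      \<exists>X \<in> carrier_mat n n. l1_norm X \<le> m / 2 \<and> char_poly (A + supp_restrict A X + Z) = p"
    using nilpotent_nSSP_perturbation_char_poly[OF A assms(3,4) half_gt_zero[OF m]] by blast
  obtain \<zeta> where \<zeta>: "0 < \<zeta>" and Z: "l1_norm (fill_zeros A P' \<zeta>) \<le> \<delta>"
    using fill_zeros_small[OF \<delta>] by blast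
  show "spectrally_arbitrary P'"
  proof (rule spectrally_arbitrary_if_small_coeffs[OF P' \<epsilon>])
    fix p :: "real poly" assume "monic p" "degree p = n" "\<forall>j<n. \<bar>coeff p j\<bar> \<le> \<epsilon>"
    then obtain X where X: "X \<in> carrier_mat n n" "l1_norm X \<le> m / 2"
      and cp: "char_poly (A + supp_restrict A X + fill_zeros A P' \<zeta>) = p"
      using realize[OF _ Z] fill_zeros_carrier[of A P' \<zeta>] A by auto
    have "in_qual_class (A + supp_restrict A X + fill_zeros A P' \<zeta>) P'"
      using in_qual_class_superpattern_perturbation[OF assms(2) sup \<zeta> _ min] X A m by auto
    then show "\<exists>M. in_qual_class M P' \<and> char_poly M = p" using cp by blast
  qed
qed

end
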